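(* Let $d\ge 0$ be a fixed integer and let $\{G_n\}_{n=1}^{\infty}$ be a sequence of finite simple graphs, each regular of degree $d$, such that $|V(G_n)|$ increases with $n$. Then the Laplacian coefficients $c(\widehat{G_n},k)$ of the cones $\widehat{G_n}$ are asymptotically normal (by central and local limit theorems).
   Context: The cone $\widehat{G}$ over a graph $G$ is the graph obtained from $G$ by adding one new vertex adjacent to every vertex of $G$. For a finite simple graph $H$ with $N$ vertices, let $L(H)=D(H)-A(H)$ be its Laplacian matrix ($D(H)$ the diagonal degree matrix, $A(H)$ the adjacency matrix), and write $\det(xI-L(H))=\sum_{k=0}^{N}(-1)^{N-k}c(H,k)x^k$; the numbers $c(H,k)\ge 0$ are the Laplacian coefficients. For $H_n=\widehat{G_n}$ with $N_n=|V(H_n)|$, let $p(n,k)=c(H_n,k)/\sum_{j=0}^{N_n}c(H_n,j)$, and let $\mu_n$, $\sigma_n^2$ be the mean and variance of the distribution $(p(n,k))_k$. Asymptotic normality by a central limit theorem means $\lim_{n\to\infty}\sup_{x\in\mathbb{R}}\left|\sum_{k\le \mu_n+x\sigma_n}p(n,k)-\frac{1}{\sqrt{2\pi}}\int_{-\infty}^x e^{-t^2/2}dt\right|=0$; by a local limit theorem means $\lim_{n\to\infty}\sup_{x\in\mathbb{R}}\left|\sigma_n p(n,\lfloor\mu_n+x\sigma_n\rfloor)-\frac{1}{\sqrt{2\pi}}e^{-x^2/2}\right|=0$. *)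

theory Defs
  imports "HOL-Analysis.Analysis" "Jordan_Normal_Form.Char_Poly"
begin

text \<open>A finite simple graph on vertex set {0..<N} is given by N and a symmetric,
irreflexive adjacency relation E (only its restriction to {0..<N} matters).\<close>

definition simple_graph :: "nat \<Rightarrow> (nat \<Rightarrow> nat \<Rightarrow> bool) \<Rightarrow> bool" where
  "simple_graph N E \<longleftrightarrow> (\<forall>i<N. \<forall>j<N. E i j \<longleftrightarrow> E j i) \<and> (\<forall>i<N. \<not> E i i)"

definition graph_degree :: "nat \<Rightarrow> (nat \<Rightarrow> nat \<Rightarrow> bool) \<Rightarrow> nat \<Rightarrow> nat" where
  "graph_degree N E v = card {u. u < N \<and> E v u}"

definition regular_graph :: "nat \<Rightarrow> (nat \<Rightarrow> nat \<Rightarrow> bool) \<Rightarrow> nat \<Rightarrow> bool" where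
  "regular_graph N E d \<longleftrightarrow> (\<forall>v<N. graph_degree N E v = d)"

text \<open>Cone: new vertex N adjacent to all vertices 0..<N; vertex set {0..<N+1}.\<close>
definition cone_adj :: "nat \<Rightarrow> (nat \<Rightarrow> nat \<Rightarrow> bool) \<Rightarrow> nat \<Rightarrow> nat \<Rightarrow> bool" where
  "cone_adj N E i j \<longleftrightarrow>
     (i < N \<and> j < N \<and> E i j) \<or> (i = N \<and> j < N) \<or> (j = N \<and> i < N)"

definition laplacian :: "nat \<Rightarrow> (nat \<Rightarrow> nat \<Rightarrow> bool) \<Rightarrow> real mat" where
  "laplacian N E = mat N N (\<lambda>(i, j).
      (if i = j then real (graph_degree N E i) else 0) - (if E i j then 1 else 0))"

text \<open>det(xI - L) = sum_k (-1)^(N-k) c(H,k) x^k.\<close>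
definition lap_coeff :: "nat \<Rightarrow> (nat \<Rightarrow> nat \<Rightarrow> bool) \<Rightarrow> nat \<Rightarrow> real" where
  "lap_coeff N E k = (-1) ^ (N - k) * coeff (char_poly (laplacian N E)) k"

definition lap_dist :: "nat \<Rightarrow> (nat \<Rightarrow> nat \<Rightarrow> bool) \<Rightarrow> int \<Rightarrow> real" where
  "lap_dist N E k = (if 0 \<le> k \<and> k \<le> int N
      then lap_coeff N E (nat k) / (\<Sum>j\<le>N. lap_coeff N E j) else 0)"

definition lap_mean :: "nat \<Rightarrow> (nat \<Rightarrow> nat \<Rightarrow> bool) \<Rightarrow> real" where
  "lap_mean N E = (\<Sum>k\<le>N. real k * lap_dist N E (int k))"

definition lap_var :: "nat \<Rightarrow> (nat \<Rightarrow> nat \<Rightarrow> bool) \<Rightarrow> real" where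
  "lap_var N E = (\<Sum>k\<le>N. (real k - lap_mean N E)\<^sup>2 * lap_dist N E (int k))"

definition std_normal_cdf :: "real \<Rightarrow> real" where
  "std_normal_cdf x = (1 / sqrt (2 * pi)) * (LBINT t:{..x}. exp (- t\<^sup>2 / 2))"

definition asymp_normal_CLT :: "(nat \<Rightarrow> nat) \<Rightarrow> (nat \<Rightarrow> int \<Rightarrow> real) \<Rightarrow> (nat \<Rightarrow> real) \<Rightarrow> (nat \<Rightarrow> real) \<Rightarrow> bool" where
  "asymp_normal_CLT N p \<mu> \<sigma> \<longleftrightarrow>
     (\<lambda>n. SUP x::real. \<bar>(\<Sum>k\<in>{k. k \<le> N n \<and> real k \<le> \<mu> n + x * \<sigma> n}. p n (int k))
                          - std_normal_cdf x\<bar>) \<longlonglongrightarrow> 0"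

definition asymp_normal_LLT :: "(nat \<Rightarrow> int \<Rightarrow> real) \<Rightarrow> (nat \<Rightarrow> real) \<Rightarrow> (nat \<Rightarrow> real) \<Rightarrow> bool" where
  "asymp_normal_LLT p \<mu> \<sigma> \<longleftrightarrow>
     (\<lambda>n. SUP x::real. \<bar>\<sigma> n * p n \<lfloor>\<mu> n + x * \<sigma> n\<rfloor>
                          - (1 / sqrt (2 * pi)) * exp (- x\<^sup>2 / 2)\<bar>) \<longlonglongrightarrow> 0"

end

theory Submission
  imports Defs "HOL-Probability.Probability" "HOL-Real_Asymp.Real_Asymp" "Jordan_Normal_Form.Schur_Decomposition"
begin

text \<open>
  The Laplacian of a simple graph is positive semidefinite, so its characteristic polynomial is
  \<open>\<Prod>i. (x - r\<^sub>i)\<close> with real \<open>r\<^sub>i \<ge> 0\<close>. Up to signs the Laplacian coefficients are those of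
  \<open>\<Prod>i. (x + r\<^sub>i)\<close>, hence (Harper) the normalised coefficient sequence is the distribution of a sum
  of independent Bernoulli variables with parameters \<open>q\<^sub>i = 1/(1 + r\<^sub>i)\<close>, whose variance is
  \<open>\<Sum>i. r\<^sub>i/(1 + r\<^sub>i)\<^sup>2\<close>. Such Poisson binomial distributions satisfy central and local limit
  theorems as soon as the variance tends to infinity: the characteristic function is a product
  of Bernoulli factors, which a third order Taylor expansion compares with the Gaussian one
  (Levy continuity and Polya's theorem give the CLT, Fourier inversion the LLT).

  For the cone over a \<open>d\<close>-regular graph on \<open>N\<close> vertices, \<open>N + 1\<close> is a Laplacian eigenvalue, and
  the trace identities \<open>\<Sum>r\<^sub>i = N (d + 2)\<close> and \<open>\<Sum>r\<^sub>i\<^sup>2 = N (d + 1) (d + 2) + N\<^sup>2 + N\<close> then leave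
  enough mass on the remaining eigenvalues to force a variance of order \<open>N\<close>.
\<close>

section \<open>Poisson binomial characteristic functions\<close>

lemma cos_taylor_bound: "\<bar>cos (t::real) - 1 + t\<^sup>2/2\<bar> \<le> t\<^sup>2 * t\<^sup>2 / 24"
proof -
  have approx: "cmod (iexp t - (\<Sum>k\<le>3. (\<i> * complex_of_real t) ^ k / fact k)) \<le> \<bar>t\<bar> ^ 4 / 24"
    using iexp_approx1[of t 3] by (simp add: fact_numeral)
  have "\<bar>Re (iexp t - (\<Sum>k\<le>3. (\<i> * complex_of_real t) ^ k / fact k))\<bar> \<le> \<bar>t\<bar> ^ 4 / 24"
    using abs_Re_le_cmod approx order_trans by blast
  moreover have "Re (iexp t - (\<Sum>k\<le>3. (\<i> * complex_of_real t) ^ k / fact k)) = cos t - 1 + t\<^sup>2/2"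
    by (simp add: Re_exp fact_numeral numeral_3_eq_3 power2_eq_square)
  moreover have "\<bar>t\<bar> ^ 4 = t\<^sup>2 * t\<^sup>2" by (simp add: power2_eq_square power4_eq_xxxx)
  ultimately show ?thesis by simp
qed

lemma one_minus_cos_ge:
  assumes "\<bar>t\<bar> \<le> pi" shows "t\<^sup>2 / 16 \<le> 1 - cos (t::real)"
proof (cases "\<bar>t\<bar> \<le> 2")
  case True
  have "t\<^sup>2 \<le> 2\<^sup>2" using True by (metis abs_le_square_iff abs_numeral)
  then have "t\<^sup>2 * t\<^sup>2 \<le> t\<^sup>2 * 4" by (intro mult_left_mono) auto
  with cos_taylor_bound[of t] zero_le_power2[of t] show ?thesis by linarith
next
  case False
  have "cos (2::real) - 1 + 2\<^sup>2/2 \<le> (2::real)\<^sup>2 * 2\<^sup>2 / 24"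
    using cos_taylor_bound[of 2] by (rule abs_le_D1)
  then have cos_2: "cos (2::real) \<le> - 1/3" by (simp add: power2_eq_square)
  have "cos t = cos \<bar>t\<bar>" by (simp add: abs_if)
  also have "\<dots> \<le> cos (2::real)" using False assms by (intro cos_monotone_0_pi_le) auto
  finally have "1 - cos t \<ge> 4/3" using cos_2 by linarith
  moreover have "t\<^sup>2 \<le> pi\<^sup>2" using assms by (metis abs_le_square_iff abs_of_nonneg pi_ge_zero)
  moreover have "pi\<^sup>2 \<le> 16" using pi_less_4 pi_gt3 power_mono[of pi 4 2] by simp
  ultimately show ?thesis by linarith
qed

lemma exp_minus_le_taylor2:
  assumes "(0::real) \<le> a" shows "exp (- a) \<le> 1 - a + a\<^sup>2/2"
proof -
  let ?g = "\<lambda>a::real. 1 - a + a\<^sup>2/2 - exp (- a)"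
  have deriv: "\<And>x. (?g has_real_derivative (- 1 + x + exp (- x))) (at x)"
    by (auto intro!: derivative_eq_intros simp: power2_eq_square)
  have "?g 0 \<le> ?g a"
  proof (rule DERIV_nonneg_imp_nondecreasing[OF assms])
    fix x assume "0 \<le> x" "x \<le> a"
    show "\<exists>y. (?g has_real_derivative y) (at x) \<and> 0 \<le> y"
      using deriv[of x] exp_ge_add_one_self[of "-x"] by auto
  qed
  then show ?thesis by simp
qed

lemma abs_exp_minus_taylor1_le:
  assumes "(0::real) \<le> a" shows "\<bar>exp (- a) - (1 - a)\<bar> \<le> a\<^sup>2/2"
  using exp_minus_le_taylor2[OF assms] exp_ge_add_one_self[of "-a"] by (simp add: abs_le_iff)

lemma iexp_taylor2_bound:
  "cmod (iexp x - (complex_of_real (1 - x\<^sup>2/2) + \<i> * complex_of_real x)) \<le> \<bar>x\<bar>^3/6"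
proof -
  have "(\<Sum>k\<le>2. (\<i> * complex_of_real x) ^ k / fact k) = complex_of_real (1 - x\<^sup>2/2) + \<i> * complex_of_real x"
    by (simp add: numeral_2_eq_2 fact_numeral power_mult_distrib)
  with iexp_approx1[of x 2] show ?thesis by (simp add: fact_numeral numeral_3_eq_3)
qed

lemma bernoulli_var_bounds:
  assumes "0 \<le> (q::real)" "q \<le> 1" shows "0 \<le> q * (1 - q)" "q * (1 - q) \<le> 1/4"
proof -
  show "0 \<le> q * (1 - q)" using assms by simp
  have "0 \<le> (q - 1/2)\<^sup>2" by simp
  then show "q * (1 - q) \<le> 1/4" by (simp add: power2_eq_square algebra_simps)
qed

lemma norm_bernoulli_char_le:
  fixes q t :: real assumes "0 \<le> q" "q \<le> 1"
  shows "cmod (1 - complex_of_real q + complex_of_real q * iexp t) \<le> exp (- (q * (1 - q)) * (1 - cos t))"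
proof -
  have sin_sq: "(sin t)\<^sup>2 = 1 - (cos t)\<^sup>2" by (simp add: sin_squared_eq)
  have "(cmod (1 - complex_of_real q + complex_of_real q * iexp t))\<^sup>2 = (1 - q + q * cos t)\<^sup>2 + (q * sin t)\<^sup>2"
    by (simp add: cmod_power2 Re_exp Im_exp)
  also have "\<dots> = 1 - 2 * (q * (1 - q)) * (1 - cos t)"
    by (simp only: power_mult_distrib sin_sq) (simp add: power2_eq_square algebra_simps)
  also have "\<dots> \<le> exp (- (2 * (q * (1 - q)) * (1 - cos t)))"
    using exp_ge_add_one_self[of "- (2 * (q * (1 - q)) * (1 - cos t))"] by simp
  also have "\<dots> = (exp (- (q * (1 - q)) * (1 - cos t)))\<^sup>2"
    by (simp add: exp_double[symmetric] algebra_simps)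
  finally show ?thesis by (rule power2_le_imp_le) simp
qed

text \<open>The centring factor \<open>e\<^sup>-\<^sup>i\<^sup>q\<^sup>t\<close> kills the first order term, so the error is of third order.\<close>

lemma bernoulli_char_centered_taylor:
  fixes q t :: real assumes q: "0 \<le> q" "q \<le> 1"
  shows "cmod (iexp (- q * t) * (1 - complex_of_real q + complex_of_real q * iexp t)
              - complex_of_real (1 - q * (1 - q) * t\<^sup>2/2)) \<le> q * (1 - q) * \<bar>t\<bar>^3 / 6"
proof -
  define v where "v = q * (1 - q)"
  define T where "T = (\<lambda>x::real. complex_of_real (1 - x\<^sup>2/2) + \<i> * complex_of_real x)"
  define R where "R = (\<lambda>x::real. iexp x - T x)"
  have R: "cmod (R x) \<le> \<bar>x\<bar>^3/6" for x unfolding R_def T_def by (rule iexp_taylor2_bound)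
  have "iexp (- q * t) * (1 - complex_of_real q + complex_of_real q * iexp t)
      = complex_of_real (1 - q) * iexp (- q * t) + complex_of_real q * iexp ((1 - q) * t)"
    by (simp add: algebra_simps exp_add[symmetric])
  also have "\<dots> = complex_of_real (1 - q) * T (- q * t) + complex_of_real q * T ((1 - q) * t)
                  + (complex_of_real (1 - q) * R (- q * t) + complex_of_real q * R ((1 - q) * t))"
    unfolding R_def by (simp add: algebra_simps)
  also have "complex_of_real (1 - q) * T (- q * t) + complex_of_real q * T ((1 - q) * t)
     = complex_of_real (1 - v * t\<^sup>2/2)"
    unfolding T_def v_def by (simp add: power2_eq_square algebra_simps) (simp add: field_simps)
  finally have expand: "iexp (- q * t) * (1 - complex_of_real q + complex_of_real q * iexp t) - complex_of_real (1 - v * t\<^sup>2/2)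
     = complex_of_real (1 - q) * R (- q * t) + complex_of_real q * R ((1 - q) * t)" by simp
  have "0 \<le> 1 - q" using q by simp
  then have "cmod (complex_of_real (1 - q) * R (- q * t) + complex_of_real q * R ((1 - q) * t))
        \<le> (1 - q) * cmod (R (- q * t)) + q * cmod (R ((1 - q) * t))"
    using q norm_triangle_ineq[of "complex_of_real (1 - q) * R (- q * t)" "complex_of_real q * R ((1 - q) * t)"]
    by (simp only: norm_mult norm_of_real abs_of_nonneg)
  also have "\<dots> \<le> (1 - q) * (\<bar>- q * t\<bar>^3/6) + q * (\<bar>(1 - q) * t\<bar>^3/6)"
    using q by (intro add_mono mult_left_mono R) auto
  also have "\<bar>- q * t\<bar> = q * \<bar>t\<bar>" using q by (simp add: abs_mult)
  also have "\<bar>(1 - q) * t\<bar> = (1 - q) * \<bar>t\<bar>" using q by (simp add: abs_mult)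
  also have "(1 - q) * ((q * \<bar>t\<bar>)^3/6) + q * (((1 - q) * \<bar>t\<bar>)^3/6) = v * \<bar>t\<bar>^3 * (1 - 2 * v) / 6"
    unfolding v_def by (simp add: power_mult_distrib power2_eq_square power3_eq_cube field_simps)
  also have "\<dots> \<le> v * \<bar>t\<bar>^3 / 6"
    using bernoulli_var_bounds[OF q] unfolding v_def[symmetric] by (intro divide_right_mono) (auto intro: mult_left_le)
  finally have "cmod (iexp (- q * t) * (1 - complex_of_real q + complex_of_real q * iexp t)
      - complex_of_real (1 - v * t\<^sup>2/2)) \<le> v * \<bar>t\<bar>^3 / 6"
    unfolding expand .
  then show ?thesis unfolding v_def .
qed

lemma bernoulli_char_centered_approx:
  fixes q t :: real assumes q: "0 \<le> q" "q \<le> 1" and t: "\<bar>t\<bar> \<le> 1"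
  shows "cmod (iexp (- q * t) * (1 - complex_of_real q + complex_of_real q * iexp t)
              - complex_of_real (exp (- (q * (1 - q) * t\<^sup>2 / 2)))) \<le> q * (1 - q) * \<bar>t\<bar>^3"
proof -
  define v where "v = q * (1 - q)"
  have v0: "0 \<le> v" and v4: "v \<le> 1/4" using bernoulli_var_bounds[OF q] unfolding v_def by auto
  have "\<bar>exp (- (v * t\<^sup>2/2)) - (1 - v * t\<^sup>2/2)\<bar> \<le> (v * t\<^sup>2/2)\<^sup>2/2"
    using v0 by (intro abs_exp_minus_taylor1_le) auto
  also have "\<dots> = v * v * (\<bar>t\<bar>^3 * \<bar>t\<bar>) / 8" by (simp add: power2_eq_square power3_eq_cube)
  also have "\<dots> \<le> v * (1/4) * (\<bar>t\<bar>^3 * 1) / 8"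
    using v0 v4 t by (intro divide_right_mono mult_mono) auto
  finally have gauss_err: "cmod (complex_of_real (1 - v * t\<^sup>2/2) - complex_of_real (exp (- (v * t\<^sup>2 / 2))))
      \<le> v * \<bar>t\<bar>^3 / 32"
    by (simp only: norm_of_real of_real_diff[symmetric] abs_minus_commute)
  have "cmod (iexp (- q * t) * (1 - complex_of_real q + complex_of_real q * iexp t)
        - complex_of_real (exp (- (v * t\<^sup>2 / 2)))) \<le> v * \<bar>t\<bar>^3 / 6 + v * \<bar>t\<bar>^3 / 32"
    using norm_triangle_le[OF add_mono[OF bernoulli_char_centered_taylor[OF q, of t, folded v_def] gauss_err]]
    by (simp add: algebra_simps)
  also have "\<dots> \<le> v * \<bar>t\<bar>^3" using v0 by simp
  finally show ?thesis unfolding v_def by simp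
qed

lemma norm_prod_list_le_1:
  fixes f :: "'a \<Rightarrow> 'b::{real_normed_algebra_1, comm_monoid_mult}"
  shows "(\<And>x. x \<in> set xs \<Longrightarrow> norm (f x) \<le> 1) \<Longrightarrow> norm (prod_list (map f xs)) \<le> 1"
proof (induction xs)
  case (Cons a xs)
  have "norm (prod_list (map f (a # xs))) \<le> norm (f a) * norm (prod_list (map f xs))"
    by (simp add: norm_mult_ineq)
  also have "\<dots> \<le> 1 * 1" using Cons by (intro mult_mono) auto
  finally show ?case by simp
qed simp

lemma norm_prod_list_diff_le:
  fixes f g :: "'a \<Rightarrow> 'b::{real_normed_algebra_1, comm_monoid_mult}"
  assumes "\<And>x. x \<in> set xs \<Longrightarrow> norm (f x) \<le> 1" "\<And>x. x \<in> set xs \<Longrightarrow> norm (g x) \<le> 1"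
  shows "norm (prod_list (map f xs) - prod_list (map g xs)) \<le> sum_list (map (\<lambda>x. norm (f x - g x)) xs)"
  using assms
proof (induction xs)
  case (Cons a xs)
  let ?F = "prod_list (map f xs)" and ?G = "prod_list (map g xs)"
  have "norm ?G \<le> 1" using Cons.prems by (auto intro!: norm_prod_list_le_1)
  have "f a * ?F - g a * ?G = f a * (?F - ?G) + (f a - g a) * ?G" by (simp add: algebra_simps)
  then have "norm (f a * ?F - g a * ?G) \<le> norm (f a) * norm (?F - ?G) + norm (f a - g a) * norm ?G"
    by (metis norm_triangle_le norm_mult_ineq add_mono)
  also have "\<dots> \<le> 1 * norm (?F - ?G) + norm (f a - g a) * 1"
    using Cons.prems \<open>norm ?G \<le> 1\<close> by (intro add_mono mult_mono) auto
  also have "\<dots> \<le> sum_list (map (\<lambda>x. norm (f x - g x)) xs) + norm (f a - g a)"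
    using Cons by simp
  finally show ?case by simp
qed simp

text \<open>
  A list \<open>qs\<close> of parameters in \<open>[0, 1]\<close> describes the sum of independent Bernoulli variables
  with these success probabilities; its mean is \<^term>\<open>sum_list qs\<close>.
\<close>

definition pb_char :: "real list \<Rightarrow> real \<Rightarrow> complex" where
  "pb_char qs t = prod_list (map (\<lambda>q. 1 - complex_of_real q + complex_of_real q * iexp t) qs)"

definition pb_var :: "real list \<Rightarrow> real" where
  "pb_var qs = sum_list (map (\<lambda>q. q * (1 - q)) qs)"

lemma pb_var_Cons: "pb_var (q # qs) = q * (1 - q) + pb_var qs"
  by (simp add: pb_var_def)

lemma pb_var_nonneg: "(\<And>q. q \<in> set qs \<Longrightarrow> 0 \<le> q \<and> q \<le> 1) \<Longrightarrow> 0 \<le> pb_var qs"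
  unfolding pb_var_def by (induction qs) (auto intro!: add_nonneg_nonneg)

lemma norm_pb_char_le:
  assumes qs: "\<And>q. q \<in> set qs \<Longrightarrow> 0 \<le> q \<and> q \<le> 1" and t: "\<bar>t\<bar> \<le> pi"
  shows "cmod (pb_char qs t) \<le> exp (- (pb_var qs * (t\<^sup>2 / 16)))"
  using qs
proof (induction qs)
  case Nil then show ?case by (simp add: pb_char_def pb_var_def)
next
  case (Cons q qs)
  have q: "0 \<le> q" "q \<le> 1" using Cons.prems by auto
  have "cmod (pb_char (q # qs) t)
      = cmod (1 - complex_of_real q + complex_of_real q * iexp t) * cmod (pb_char qs t)"
    by (simp add: pb_char_def norm_mult)
  also have "\<dots> \<le> exp (- (q * (1 - q)) * (1 - cos t)) * exp (- (pb_var qs * (t\<^sup>2 / 16)))"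
    using Cons q by (intro mult_mono norm_bernoulli_char_le) auto
  also have "\<dots> \<le> exp (- (q * (1 - q) * (t\<^sup>2/16))) * exp (- (pb_var qs * (t\<^sup>2 / 16)))"
  proof -
    have "q * (1 - q) * (t\<^sup>2/16) \<le> q * (1 - q) * (1 - cos t)"
      using one_minus_cos_ge[OF t] bernoulli_var_bounds[OF q] by (intro mult_left_mono) auto
    then show ?thesis by (intro mult_right_mono) auto
  qed
  also have "\<dots> = exp (- (pb_var (q # qs) * (t\<^sup>2 / 16)))"
    unfolding pb_var_Cons by (simp add: exp_add[symmetric] distrib_right add_divide_distrib)
  finally show ?case .
qed

lemma iexp_mult_pb_char:
  "iexp (- sum_list qs * t) * pb_char qs t
    = prod_list (map (\<lambda>q. iexp (- q * t) * (1 - complex_of_real q + complex_of_real q * iexp t)) qs)"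
proof (induction qs)
  case (Cons q qs)
  have "iexp (- sum_list (q # qs) * t) = iexp (- q * t) * iexp (- sum_list qs * t)"
    by (simp add: exp_add[symmetric] algebra_simps)
  then show ?case using Cons by (simp add: pb_char_def mult_ac)
qed (simp add: pb_char_def)

lemma exp_pb_var_eq_prod:
  "complex_of_real (exp (- (pb_var qs * c))) = prod_list (map (\<lambda>q. complex_of_real (exp (- (q * (1 - q) * c)))) qs)"
proof (induction qs)
  case (Cons q qs)
  have "exp (- (pb_var (q # qs) * c)) = exp (- (q * (1 - q) * c)) * exp (- (pb_var qs * c))"
    unfolding pb_var_Cons by (simp add: exp_add[symmetric] distrib_right)
  then show ?case using Cons by simp
qed (simp add: pb_var_def)

lemma pb_char_centered_approx:
  assumes qs: "\<And>q. q \<in> set qs \<Longrightarrow> 0 \<le> q \<and> q \<le> 1" and t: "\<bar>t\<bar> \<le> 1"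
  shows "cmod (iexp (- sum_list qs * t) * pb_char qs t - complex_of_real (exp (- (pb_var qs * (t\<^sup>2 / 2)))))
    \<le> pb_var qs * \<bar>t\<bar>^3"
proof -
  define f where "f = (\<lambda>q. iexp (- q * t) * (1 - complex_of_real q + complex_of_real q * iexp t))"
  define g where "g = (\<lambda>q. complex_of_real (exp (- (q * (1 - q) * (t\<^sup>2 / 2)))))"
  note f_prod = iexp_mult_pb_char[of qs t, folded f_def]
  note g_prod = exp_pb_var_eq_prod[of qs "t\<^sup>2 / 2", folded g_def]
  have norm_f: "cmod (f q) \<le> 1" if "q \<in> set qs" for q
  proof -
    have q: "0 \<le> q" "q \<le> 1" using qs that by auto
    have "cmod (f q) = cmod (complex_of_real (1 - q) + complex_of_real q * iexp t)"
      unfolding f_def by (simp add: norm_mult)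
    also have "\<dots> \<le> cmod (complex_of_real (1 - q)) + cmod (complex_of_real q * iexp t)"
      by (rule norm_triangle_ineq)
    also have "cmod (complex_of_real (1 - q)) = 1 - q" using q by (simp only: norm_of_real abs_of_nonneg)
    also have "cmod (complex_of_real q * iexp t) = q" using q by (simp add: norm_mult)
    finally show ?thesis by simp
  qed
  have norm_g: "cmod (g q) \<le> 1" if "q \<in> set qs" for q
    using qs[OF that] unfolding g_def by (simp add: zero_le_mult_iff)
  have "cmod (prod_list (map f qs) - prod_list (map g qs)) \<le> sum_list (map (\<lambda>q. cmod (f q - g q)) qs)"
    using norm_f norm_g by (rule norm_prod_list_diff_le)
  also have "\<dots> \<le> sum_list (map (\<lambda>q. q * (1 - q) * \<bar>t\<bar>^3) qs)"
  proof (rule sum_list_mono)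
    fix q assume "q \<in> set qs"
    then have q: "0 \<le> q" "q \<le> 1" using qs by auto
    show "cmod (f q - g q) \<le> q * (1 - q) * \<bar>t\<bar>^3"
      using bernoulli_char_centered_approx[OF q t] unfolding f_def g_def by (simp add: algebra_simps)
  qed
  also have "\<dots> = pb_var qs * \<bar>t\<bar>^3"
    unfolding pb_var_def by (induction qs) (simp_all add: algebra_simps)
  finally show ?thesis unfolding f_prod g_prod .
qed

section \<open>The local limit theorem\<close>

lemma set_integral_iexp_symmetric:
  fixes a c :: real assumes a: "0 \<le> a"
  shows "(CLBINT s:{-a..a}. iexp (c * s))
    = (if c = 0 then complex_of_real (2 * a) else complex_of_real (2 * sin (c * a) / c))"
proof (cases "c = 0")
  case True
  have "(CLBINT s:{-a..a}. iexp (c * s)) = (CLBINT s:{-a..a}. 1)" using True by simp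
  also have "\<dots> = complex_of_real (measure lborel {-a..a})"
    by (simp add: set_integral_const scaleR_conv_of_real)
  finally show ?thesis using True a by simp
next
  case False
  have "(CLBINT s:{-a..a}. iexp (c * s)) = (CLBINT s=-a..a. iexp (c * s))"
    using a by (simp add: interval_integral_Icc)
  also have "\<dots> = (- \<i> / complex_of_real c) * iexp (c * a) - (- \<i> / complex_of_real c) * iexp (c * (-a))"
    by (rule interval_integral_FTC_finite[where F = "\<lambda>s. (- \<i> / complex_of_real c) * iexp (c * s)"])
       (use False in \<open>auto intro!: derivative_eq_intros continuous_intros
          simp: has_vector_derivative_complex_iff Re_exp Im_exp\<close>)
  also have "\<dots> = complex_of_real (2 * sin (c * a) / c)"
    using False by (simp add: complex_eq_iff Re_exp Im_exp field_simps)
  finally show ?thesis using False by simp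
qed

lemma set_integral_iexp_period:
  fixes m :: int and \<sigma> :: real assumes \<sigma>: "0 < \<sigma>"
  shows "(CLBINT s:{-(pi * \<sigma>)..pi * \<sigma>}. iexp (real_of_int m / \<sigma> * s))
    = (if m = 0 then complex_of_real (2 * pi * \<sigma>) else 0)"
proof -
  have "sin (real_of_int m / \<sigma> * (pi * \<sigma>)) = 0"
    using \<sigma> sin_times_pi_eq_0[of "real_of_int m"] by (simp add: mult.commute)
  then show ?thesis
    using set_integral_iexp_symmetric[of "pi * \<sigma>" "real_of_int m / \<sigma>"] \<sigma> by simp
qed

lemma set_integral_sum:
  fixes f :: "'i \<Rightarrow> 'a \<Rightarrow> 'b::{banach, second_countable_topology}"
  assumes "\<And>i. i \<in> I \<Longrightarrow> set_integrable M A (f i)"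
  shows "(LINT x:A|M. (\<Sum>i\<in>I. f i x)) = (\<Sum>i\<in>I. LINT x:A|M. f i x)"
  using assms unfolding set_lebesgue_integral_def set_integrable_def
  by (simp add: scaleR_sum_right integral_sum)

text \<open>
  \<open>std_char M p \<mu> \<sigma>\<close> is the characteristic function of \<open>(X - \<mu>)/\<sigma>\<close> for a random variable \<open>X\<close>
  with distribution \<open>p\<close> on \<open>{0..M}\<close>.
\<close>

definition std_char :: "nat \<Rightarrow> (int \<Rightarrow> real) \<Rightarrow> real \<Rightarrow> real \<Rightarrow> real \<Rightarrow> complex" where
  "std_char M p \<mu> \<sigma> s = (\<Sum>j\<le>M. complex_of_real (p (int j)) * iexp ((real j - \<mu>) / \<sigma> * s))"

lemma continuous_on_std_char: "continuous_on A (std_char M p \<mu> \<sigma>)"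
  unfolding std_char_def by (intro continuous_intros)

lemma std_char_inversion:
  fixes M :: nat and p :: "int \<Rightarrow> real" and \<mu> \<sigma> :: real and k :: int
  assumes \<sigma>: "0 < \<sigma>" and supp: "\<And>k. k < 0 \<or> k > int M \<Longrightarrow> p k = 0"
  shows "(CLBINT s:{-(pi * \<sigma>)..pi * \<sigma>}. std_char M p \<mu> \<sigma> s * iexp (- ((real_of_int k - \<mu>) / \<sigma>) * s))
         = complex_of_real (2 * pi * \<sigma> * p k)"
proof -
  have integrand: "std_char M p \<mu> \<sigma> s * iexp (- ((real_of_int k - \<mu>) / \<sigma>) * s)
     = (\<Sum>j\<le>M. complex_of_real (p (int j)) * iexp (real_of_int (int j - k) / \<sigma> * s))" for s
  proof -
    have "iexp ((real j - \<mu>) / \<sigma> * s) * iexp (- ((real_of_int k - \<mu>) / \<sigma>) * s)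
        = iexp (real_of_int (int j - k) / \<sigma> * s)" for j
    proof -
      have "(real j - \<mu>) / \<sigma> * s + (- ((real_of_int k - \<mu>) / \<sigma>) * s) = real_of_int (int j - k) / \<sigma> * s"
        using \<sigma> by (simp add: field_simps)
      then show ?thesis by (simp add: exp_add[symmetric] algebra_simps)
    qed
    then show ?thesis unfolding std_char_def by (simp add: sum_distrib_right mult.assoc)
  qed
  have "(CLBINT s:{-(pi * \<sigma>)..pi * \<sigma>}. std_char M p \<mu> \<sigma> s * iexp (- ((real_of_int k - \<mu>) / \<sigma>) * s))
     = (\<Sum>j\<le>M. CLBINT s:{-(pi * \<sigma>)..pi * \<sigma>}. complex_of_real (p (int j)) * iexp (real_of_int (int j - k) / \<sigma> * s))"
    unfolding integrand by (intro set_integral_sum borel_integrable_atLeastAtMost' continuous_intros)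
  also have "\<dots> = (\<Sum>j\<le>M. if int j = k then complex_of_real (2 * pi * \<sigma> * p (int j)) else 0)"
  proof (intro sum.cong refl)
    fix j
    show "(CLBINT s:{-(pi * \<sigma>)..pi * \<sigma>}. complex_of_real (p (int j)) * iexp (real_of_int (int j - k) / \<sigma> * s))
      = (if int j = k then complex_of_real (2 * pi * \<sigma> * p (int j)) else 0)"
      by (simp only: set_integral_mult_right set_integral_iexp_period[OF \<sigma>]) simp
  qed
  also have "\<dots> = complex_of_real (2 * pi * \<sigma> * p k)"
  proof (cases "0 \<le> k \<and> k \<le> int M")
    case True
    then obtain j0 where "k = int j0" "j0 \<le> M" by (metis nonneg_int_cases of_nat_le_iff)
    then show ?thesis by (simp add: sum.delta)
  qed (use supp in \<open>auto intro!: sum.neutral\<close>)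
  finally show ?thesis .
qed

lemma integrable_exp_minus_square:
  fixes c :: real assumes c: "0 < c"
  shows "integrable lborel (\<lambda>s. exp (- (c * s\<^sup>2)))"
proof -
  define \<sigma> where "\<sigma> = sqrt (1 / (2 * c))"
  have \<sigma>: "0 < \<sigma>" "\<sigma>\<^sup>2 = 1 / (2 * c)" using c unfolding \<sigma>_def by simp_all
  have "integrable lborel (\<lambda>s. sqrt (2 * pi * \<sigma>\<^sup>2) * normal_density 0 \<sigma> s)"
    using integrable_normal_density[OF \<sigma>(1), of 0] by (rule integrable_mult_right)
  moreover have "sqrt (2 * pi * \<sigma>\<^sup>2) * normal_density 0 \<sigma> s = exp (- (c * s\<^sup>2))" for s
    using c \<sigma> unfolding normal_density_def by (simp add: field_simps)
  ultimately show ?thesis by simp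
qed

lemma fourier_gaussian:
  "(CLINT s|lborel. complex_of_real (exp (- s\<^sup>2/2)) * iexp (- x * s))
    = complex_of_real (sqrt (2 * pi) * exp (- x\<^sup>2/2))"
proof -
  have "char std_normal_distribution (-x) = complex_of_real (exp (- x\<^sup>2/2))"
    by (simp add: char_std_normal_distribution)
  then have "(CLINT s|lborel. std_normal_density s *\<^sub>R iexp (- x * s)) = complex_of_real (exp (- x\<^sup>2/2))"
    unfolding char_def by (subst (asm) integral_density) (auto simp: normal_density_nonneg)
  moreover have "(CLINT s|lborel. complex_of_real (exp (- s\<^sup>2/2)) * iexp (- x * s))
      = sqrt (2 * pi) *\<^sub>R (CLINT s|lborel. std_normal_density s *\<^sub>R iexp (- x * s))"
    unfolding integral_scaleR_right[symmetric]
    by (rule Bochner_Integration.integral_cong) (simp_all add: std_normal_density_def scaleR_conv_of_real)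
  ultimately show ?thesis by (simp add: scaleR_conv_of_real)
qed

definition std_char_error :: "nat \<Rightarrow> (int \<Rightarrow> real) \<Rightarrow> real \<Rightarrow> real \<Rightarrow> real \<Rightarrow> complex" where
  "std_char_error M p \<mu> \<sigma> s
    = indicator {-(pi * \<sigma>)..pi * \<sigma>} s *\<^sub>R std_char M p \<mu> \<sigma> s - complex_of_real (exp (- s\<^sup>2/2))"

lemma std_char_error_measurable[measurable]: "std_char_error M p \<mu> \<sigma> \<in> borel_measurable lborel"
proof -
  have "std_char M p \<mu> \<sigma> \<in> borel_measurable borel"
    using continuous_on_std_char by (rule borel_measurable_continuous_onI)
  then show ?thesis unfolding std_char_error_def by measurable
qed

text \<open>Inverting both \<open>std_char\<close> and the Gaussian characteristic function at the same point.\<close>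

lemma local_deviation_le_char_error:
  fixes M :: nat and p :: "int \<Rightarrow> real" and \<mu> \<sigma> :: real and k :: int
  assumes \<sigma>: "0 < \<sigma>" and supp: "\<And>k. k < 0 \<or> k > int M \<Longrightarrow> p k = 0"
  shows "\<bar>\<sigma> * p k - exp (- ((real_of_int k - \<mu>) / \<sigma>)\<^sup>2 / 2) / sqrt (2 * pi)\<bar>
         \<le> (LINT s|lborel. norm (std_char_error M p \<mu> \<sigma> s)) / (2 * pi)"
proof -
  define x where "x = (real_of_int k - \<mu>) / \<sigma>"
  define E where "E = (\<lambda>s::real. iexp (- x * s))"
  have norm_E: "norm (E s) = 1" for s unfolding E_def by simp
  have "continuous_on {-(pi * \<sigma>)..pi * \<sigma>} (\<lambda>s. std_char M p \<mu> \<sigma> s * E s)"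
    unfolding E_def by (intro continuous_on_mult continuous_on_std_char continuous_intros)
  then have int_char: "integrable lborel (\<lambda>s. indicator {-(pi * \<sigma>)..pi * \<sigma>} s *\<^sub>R (std_char M p \<mu> \<sigma> s * E s))"
    unfolding set_integrable_def[symmetric] by (rule borel_integrable_atLeastAtMost')
  have int_gauss: "integrable lborel (\<lambda>s. complex_of_real (exp (- s\<^sup>2/2)) * E s)"
  proof (rule Bochner_Integration.integrable_bound)
    show "integrable lborel (\<lambda>s::real. exp (- s\<^sup>2/2))"
      using integrable_exp_minus_square[of "1/2"] by simp
    show "AE s in lborel. norm (complex_of_real (exp (- s\<^sup>2/2)) * E s) \<le> norm (exp (- s\<^sup>2/2))"
      by (simp add: norm_mult norm_E)
  qed (simp add: E_def)
  have "complex_of_real (2 * pi * \<sigma> * p k - sqrt (2 * pi) * exp (- x\<^sup>2/2))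
      = (CLINT s|lborel. indicator {-(pi * \<sigma>)..pi * \<sigma>} s *\<^sub>R (std_char M p \<mu> \<sigma> s * E s))
        - (CLINT s|lborel. complex_of_real (exp (- s\<^sup>2/2)) * E s)"
    using std_char_inversion[OF \<sigma> supp, where \<mu> = \<mu> and k = k] fourier_gaussian[of x]
    unfolding E_def x_def set_lebesgue_integral_def by simp
  also have "\<dots> = (CLINT s|lborel. std_char_error M p \<mu> \<sigma> s * E s)"
    unfolding Bochner_Integration.integral_diff[OF int_char int_gauss, symmetric] std_char_error_def
    by (rule Bochner_Integration.integral_cong) (simp_all add: algebra_simps)
  finally have "\<bar>2 * pi * \<sigma> * p k - sqrt (2 * pi) * exp (- x\<^sup>2/2)\<bar>
      = norm (CLINT s|lborel. std_char_error M p \<mu> \<sigma> s * E s)"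
    by (metis norm_of_real)
  also have "\<dots> \<le> (LINT s|lborel. norm (std_char_error M p \<mu> \<sigma> s))"
    using integral_norm_bound[of lborel "\<lambda>s. std_char_error M p \<mu> \<sigma> s * E s"]
    by (simp add: norm_mult norm_E)
  finally have bound: "\<bar>2 * pi * \<sigma> * p k - sqrt (2 * pi) * exp (- x\<^sup>2/2)\<bar>
      \<le> (LINT s|lborel. norm (std_char_error M p \<mu> \<sigma> s))" .
  have "sqrt (2 * pi) / (2 * pi) = 1 / sqrt (2 * pi)"
    by (metis div_by_1 divide_divide_eq_right mult.commute real_div_sqrt pi_gt_zero
        less_eq_real_def zero_le_mult_iff zero_le_numeral)
  then have "\<sigma> * p k - exp (- x\<^sup>2 / 2) / sqrt (2 * pi)
      = (2 * pi * \<sigma> * p k - sqrt (2 * pi) * exp (- x\<^sup>2/2)) / (2 * pi)"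
    by (simp add: field_simps)
  then show ?thesis
    using bound unfolding x_def[symmetric] by (simp add: divide_right_mono)
qed

lemma std_char_eq_pb_char:
  assumes char: "\<And>t. (\<Sum>j\<le>M. complex_of_real (p (int j)) * iexp (real j * t)) = pb_char qs t"
  shows "std_char M p \<mu> \<sigma> s = iexp (- \<mu> * (s / \<sigma>)) * pb_char qs (s / \<sigma>)"
proof -
  have "std_char M p \<mu> \<sigma> s
      = (\<Sum>j\<le>M. iexp (- \<mu> * (s / \<sigma>)) * (complex_of_real (p (int j)) * iexp (real j * (s / \<sigma>))))"
    unfolding std_char_def
  proof (intro sum.cong refl)
    fix j
    have "(real j - \<mu>) / \<sigma> * s = (real j - \<mu>) * (s / \<sigma>)" by simp
    also have "\<dots> = - \<mu> * (s / \<sigma>) + real j * (s / \<sigma>)" by (simp add: algebra_simps)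
    finally show "complex_of_real (p (int j)) * iexp ((real j - \<mu>) / \<sigma> * s)
        = iexp (- \<mu> * (s / \<sigma>)) * (complex_of_real (p (int j)) * iexp (real j * (s / \<sigma>)))"
      by (simp only:) (simp add: exp_add[symmetric] distrib_left algebra_simps)
  qed
  then show ?thesis by (simp only: sum_distrib_left[symmetric] char)
qed

lemma std_char_close_gaussian:
  assumes qs: "\<And>q. q \<in> set qs \<Longrightarrow> 0 \<le> q \<and> q \<le> 1"
    and char: "\<And>t. (\<Sum>j\<le>M. complex_of_real (p (int j)) * iexp (real j * t)) = pb_char qs t"
    and \<sigma>: "\<sigma> = sqrt (pb_var qs)" "0 < \<sigma>" and t: "\<bar>t\<bar> \<le> \<sigma>"
  shows "norm (std_char M p (sum_list qs) \<sigma> t - complex_of_real (exp (- t\<^sup>2/2))) \<le> \<bar>t\<bar>^3 / \<sigma>"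
proof -
  have var: "pb_var qs = \<sigma>\<^sup>2" using \<sigma> pb_var_nonneg[OF qs] by simp
  have t1: "\<bar>t / \<sigma>\<bar> \<le> 1" using \<sigma> t by (simp add: abs_div)
  have "pb_var qs * ((t / \<sigma>)\<^sup>2 / 2) = t\<^sup>2/2" unfolding var using \<sigma> by (simp add: field_simps)
  then have "std_char M p (sum_list qs) \<sigma> t - complex_of_real (exp (- t\<^sup>2/2))
      = iexp (- sum_list qs * (t / \<sigma>)) * pb_char qs (t / \<sigma>)
        - complex_of_real (exp (- (pb_var qs * ((t / \<sigma>)\<^sup>2 / 2))))"
    using std_char_eq_pb_char[OF char] by simp
  then have "norm (std_char M p (sum_list qs) \<sigma> t - complex_of_real (exp (- t\<^sup>2/2)))
      \<le> pb_var qs * \<bar>t / \<sigma>\<bar>^3"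
    using pb_char_centered_approx[OF qs t1] by simp
  also have "\<dots> = \<bar>t\<bar>^3 / \<sigma>"
    unfolding var using \<sigma> by (simp add: abs_div power_divide power2_eq_square power3_eq_cube)
  finally show ?thesis .
qed

lemma norm_std_char_error_le:
  assumes qs: "\<And>q. q \<in> set qs \<Longrightarrow> 0 \<le> q \<and> q \<le> 1"
    and char: "\<And>t. (\<Sum>j\<le>M. complex_of_real (p (int j)) * iexp (real j * t)) = pb_char qs t"
  shows "norm (std_char_error M p (sum_list qs) (sqrt (pb_var qs)) s)
    \<le> exp (- ((1/16) * s\<^sup>2)) + exp (- ((1/2) * s\<^sup>2))"
proof -
  define \<sigma> where "\<sigma> = sqrt (pb_var qs)"
  have var: "pb_var qs = \<sigma>\<^sup>2" and \<sigma>0: "0 \<le> \<sigma>" unfolding \<sigma>_def using pb_var_nonneg[OF qs] by simp_all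
  have "norm (indicator {-(pi * \<sigma>)..pi * \<sigma>} s *\<^sub>R std_char M p (sum_list qs) \<sigma> s) \<le> exp (- ((1/16) * s\<^sup>2))"
  proof (cases "s \<in> {-(pi * \<sigma>)..pi * \<sigma>}")
    case True
    then have cases: "0 < \<sigma> \<or> s = 0" using \<sigma>0 by (cases "\<sigma> = 0") auto
    have "norm (indicator {-(pi * \<sigma>)..pi * \<sigma>} s *\<^sub>R std_char M p (sum_list qs) \<sigma> s)
      = cmod (pb_char qs (s / \<sigma>))"
      using True std_char_eq_pb_char[OF char] by (simp add: norm_mult)
    also have "\<dots> \<le> exp (- (pb_var qs * ((s / \<sigma>)\<^sup>2 / 16)))"
      using True cases by (intro norm_pb_char_le[OF qs]) (auto simp: abs_div pos_divide_le_eq abs_le_iff)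
    also have "pb_var qs * ((s / \<sigma>)\<^sup>2 / 16) = (1/16) * s\<^sup>2"
      unfolding var using cases by (auto simp: field_simps)
    finally show ?thesis .
  qed simp
  moreover have "norm (complex_of_real (exp (- s\<^sup>2/2))) = exp (- ((1/2) * s\<^sup>2))" by simp
  ultimately show ?thesis
    using norm_triangle_ineq4[of "indicator {-(pi * \<sigma>)..pi * \<sigma>} s *\<^sub>R std_char M p (sum_list qs) \<sigma> s"
        "complex_of_real (exp (- s\<^sup>2/2))"]
    unfolding std_char_error_def \<sigma>_def[symmetric] by linarith
qed

lemma std_char_error_integral_tendsto_0:
  fixes M :: "nat \<Rightarrow> nat" and p :: "nat \<Rightarrow> int \<Rightarrow> real" and qs :: "nat \<Rightarrow> real list"
  assumes qs: "\<And>n q. q \<in> set (qs n) \<Longrightarrow> 0 \<le> q \<and> q \<le> 1"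
    and char: "\<And>n t. (\<Sum>j\<le>M n. complex_of_real (p n (int j)) * iexp (real j * t)) = pb_char (qs n) t"
    and var: "filterlim (\<lambda>n. pb_var (qs n)) at_top sequentially"
  shows "(\<lambda>n. LINT s|lborel. norm (std_char_error (M n) (p n) (sum_list (qs n)) (sqrt (pb_var (qs n))) s))
    \<longlonglongrightarrow> 0"
proof -
  define \<sigma> where "\<sigma> n = sqrt (pb_var (qs n))" for n
  have \<sigma>: "filterlim \<sigma> at_top sequentially"
    unfolding \<sigma>_def by (rule filterlim_compose[OF sqrt_at_top var])
  have "(\<lambda>n. LINT s|lborel. norm (std_char_error (M n) (p n) (sum_list (qs n)) (\<sigma> n) s))
    \<longlonglongrightarrow> integral\<^sup>L lborel (\<lambda>s::real. 0::real)"
  proof (rule integral_dominated_convergence[of "\<lambda>s. 0::real" lborel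
        "\<lambda>n s. norm (std_char_error (M n) (p n) (sum_list (qs n)) (\<sigma> n) s)"
        "\<lambda>s. exp (- ((1/16) * s\<^sup>2)) + exp (- ((1/2) * s\<^sup>2))"])
    show "integrable lborel (\<lambda>s::real. exp (- ((1/16) * s\<^sup>2)) + exp (- ((1/2) * s\<^sup>2)))"
      by (intro Bochner_Integration.integrable_add integrable_exp_minus_square) auto
    show "AE s in lborel. norm (norm (std_char_error (M n) (p n) (sum_list (qs n)) (\<sigma> n) s))
      \<le> exp (- ((1/16) * s\<^sup>2)) + exp (- ((1/2) * s\<^sup>2))" for n
      unfolding \<sigma>_def using norm_std_char_error_le[OF qs char] by simp
    show "AE s in lborel. (\<lambda>n. norm (std_char_error (M n) (p n) (sum_list (qs n)) (\<sigma> n) s)) \<longlonglongrightarrow> 0"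
    proof (rule AE_I2, rule Lim_null_comparison)
      fix s :: real
      show "eventually (\<lambda>n. norm (norm (std_char_error (M n) (p n) (sum_list (qs n)) (\<sigma> n) s))
          \<le> \<bar>s\<bar>^3 / \<sigma> n) sequentially"
        using \<sigma> unfolding filterlim_at_top
      proof (rule eventually_mono[OF spec[of _ "max 1 \<bar>s\<bar>"]])
        fix n assume "max 1 \<bar>s\<bar> \<le> \<sigma> n"
        then have "0 < \<sigma> n" "\<bar>s\<bar> \<le> \<sigma> n" by auto
        moreover have "\<sigma> n \<le> pi * \<sigma> n" using \<open>0 < \<sigma> n\<close> pi_ge_two by simp
        ultimately have "\<bar>s\<bar> \<le> pi * \<sigma> n" by linarith
        then have "s \<in> {-(pi * \<sigma> n)..pi * \<sigma> n}" by (auto simp: abs_le_iff)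
        then show "norm (norm (std_char_error (M n) (p n) (sum_list (qs n)) (\<sigma> n) s)) \<le> \<bar>s\<bar>^3 / \<sigma> n"
          using std_char_close_gaussian[of "qs n" "p n" "M n" "\<sigma> n" s] qs char \<open>0 < \<sigma> n\<close> \<open>\<bar>s\<bar> \<le> \<sigma> n\<close>
          by (simp add: std_char_error_def \<sigma>_def)
      qed
      show "(\<lambda>n. \<bar>s\<bar>^3 / \<sigma> n) \<longlonglongrightarrow> 0"
        by (rule tendsto_divide_0[OF tendsto_const filterlim_at_top_imp_at_infinity[OF \<sigma>]])
    qed
  qed simp_all
  then show ?thesis unfolding \<sigma>_def by simp
qed

lemma gaussian_lipschitz: "\<bar>exp (- (a::real)\<^sup>2/2) - exp (- b\<^sup>2/2)\<bar> \<le> \<bar>a - b\<bar>"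
proof -
  have deriv_bound: "\<bar>- u * exp (- u\<^sup>2/2)\<bar> \<le> 1" for u :: real
  proof -
    have "0 \<le> (\<bar>u\<bar> - 1)\<^sup>2" by simp
    then have "\<bar>u\<bar> \<le> 1 + u\<^sup>2/2" by (simp add: power2_eq_square algebra_simps)
    also have "\<dots> \<le> exp (u\<^sup>2/2)" by (rule exp_ge_add_one_self)
    finally have "\<bar>u\<bar> * exp (- u\<^sup>2/2) \<le> exp (u\<^sup>2/2) * exp (- u\<^sup>2/2)"
      by (intro mult_right_mono) auto
    then show ?thesis by (simp add: abs_mult exp_add[symmetric])
  qed
  have deriv: "((\<lambda>u. exp (- u\<^sup>2/2)) has_real_derivative (- u * exp (- u\<^sup>2/2))) (at u)" for u :: real
    by (auto intro!: derivative_eq_intros simp: power2_eq_square)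
  have less_case: "\<bar>exp (- a\<^sup>2/2) - exp (- b\<^sup>2/2)\<bar> \<le> \<bar>a - b\<bar>" if less: "a < b" for a b :: real
  proof -
    obtain z where "exp (- b\<^sup>2/2) - exp (- a\<^sup>2/2) = (b - a) * (- z * exp (- z\<^sup>2/2))"
      using MVT2[OF less, of "\<lambda>u. exp (- u\<^sup>2/2)" "\<lambda>u. - u * exp (- u\<^sup>2/2)"] deriv by blast
    then have "\<bar>exp (- a\<^sup>2/2) - exp (- b\<^sup>2/2)\<bar> = \<bar>b - a\<bar> * \<bar>- z * exp (- z\<^sup>2/2)\<bar>"
      by (metis abs_minus_commute abs_mult)
    also have "\<dots> \<le> \<bar>b - a\<bar> * 1" by (intro mult_left_mono deriv_bound) auto
    finally show ?thesis by (simp add: abs_minus_commute)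
  qed
  show ?thesis
  proof (cases a b rule: linorder_cases)
    case less
    then show ?thesis by (rule less_case)
  next
    case greater
    then show ?thesis using less_case[of b a] by (simp only: abs_minus_commute)
  qed simp
qed

lemma SUP_tendsto_0:
  fixes F :: "nat \<Rightarrow> 'a \<Rightarrow> real"
  assumes nonneg: "\<And>n x. 0 \<le> F n x"
    and small: "\<And>e. 0 < e \<Longrightarrow> eventually (\<lambda>n. \<forall>x. F n x \<le> e) sequentially"
  shows "(\<lambda>n. SUP x. F n x) \<longlonglongrightarrow> 0"
proof (rule tendstoI)
  fix e :: real assume "0 < e"
  then have "eventually (\<lambda>n. \<forall>x. F n x \<le> e/2) sequentially" by (intro small) simp
  then show "eventually (\<lambda>n. dist (SUP x. F n x) 0 < e) sequentially"
  proof eventually_elim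
    case (elim n)
    have "bdd_above (range (F n))" using elim by (intro bdd_aboveI2[where M="e/2"]) blast
    then have "0 \<le> (SUP x. F n x)"
      using nonneg[of n undefined] cSUP_upper[of undefined UNIV "F n"] by simp
    moreover have "(SUP x. F n x) \<le> e/2" using elim by (intro cSUP_least) blast+
    ultimately show ?case using \<open>0 < e\<close> by (simp add: dist_real_def)
  qed
qed

text \<open>
  At \<open>k = \<lfloor>\<mu> + x \<sigma>\<rfloor>\<close> the standardised point \<open>(k - \<mu>)/\<sigma>\<close> lies within \<open>1/\<sigma>\<close> of \<open>x\<close>, which costs
  at most \<open>1/\<sigma>\<close> by the Lipschitz bound on the Gaussian.
\<close>

lemma local_limit_bound:
  fixes M :: nat and p :: "int \<Rightarrow> real" and \<mu> \<sigma> x :: real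
  assumes \<sigma>: "0 < \<sigma>" and supp: "\<And>k. k < 0 \<or> k > int M \<Longrightarrow> p k = 0"
  shows "\<bar>\<sigma> * p \<lfloor>\<mu> + x * \<sigma>\<rfloor> - (1 / sqrt (2 * pi)) * exp (- x\<^sup>2 / 2)\<bar>
    \<le> (LINT s|lborel. norm (std_char_error M p \<mu> \<sigma> s)) / (2 * pi) + 1 / \<sigma>"
proof -
  define k where "k = \<lfloor>\<mu> + x * \<sigma>\<rfloor>"
  define y where "y = (real_of_int k - \<mu>) / \<sigma>"
  have "real_of_int k \<le> \<mu> + x * \<sigma>" "\<mu> + x * \<sigma> < real_of_int k + 1"
    unfolding k_def by linarith+
  then have "y \<le> x" using \<sigma> unfolding y_def by (simp add: divide_le_eq)
  have "x - 1 / \<sigma> = (x * \<sigma> - 1) / \<sigma>" using \<sigma> by (simp add: field_simps)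
  also have "\<dots> < y" unfolding y_def
    by (rule divide_strict_right_mono) (use \<open>\<mu> + x * \<sigma> < real_of_int k + 1\<close> \<sigma> in linarith)+
  finally have "x - 1 / \<sigma> < y" .
  with \<open>y \<le> x\<close> have "\<bar>y - x\<bar> \<le> 1 / \<sigma>" by simp
  moreover have "\<bar>exp (- y\<^sup>2 / 2) / sqrt (2 * pi) - (1 / sqrt (2 * pi)) * exp (- x\<^sup>2 / 2)\<bar>
      \<le> \<bar>exp (- y\<^sup>2 / 2) - exp (- x\<^sup>2 / 2)\<bar>"
    using pi_ge_two
    by (simp add: diff_divide_distrib[symmetric] divide_le_eq mult_le_cancel_left1)
  moreover have "\<bar>\<sigma> * p k - exp (- y\<^sup>2 / 2) / sqrt (2 * pi)\<bar>
      \<le> (LINT s|lborel. norm (std_char_error M p \<mu> \<sigma> s)) / (2 * pi)"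
    unfolding y_def by (rule local_deviation_le_char_error[OF \<sigma> supp])
  moreover note gaussian_lipschitz[of y x]
  ultimately show ?thesis unfolding k_def[symmetric] by linarith
qed

theorem pb_local_limit:
  fixes M :: "nat \<Rightarrow> nat" and p :: "nat \<Rightarrow> int \<Rightarrow> real" and qs :: "nat \<Rightarrow> real list"
  assumes supp: "\<And>n k. k < 0 \<or> k > int (M n) \<Longrightarrow> p n k = 0"
    and qs: "\<And>n q. q \<in> set (qs n) \<Longrightarrow> 0 \<le> q \<and> q \<le> 1"
    and char: "\<And>n t. (\<Sum>j\<le>M n. complex_of_real (p n (int j)) * iexp (real j * t)) = pb_char (qs n) t"
    and var: "filterlim (\<lambda>n. pb_var (qs n)) at_top sequentially"
  shows "asymp_normal_LLT p (\<lambda>n. sum_list (qs n)) (\<lambda>n. sqrt (pb_var (qs n)))"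
proof -
  define \<sigma> where "\<sigma> n = sqrt (pb_var (qs n))" for n
  define B where "B n = (LINT s|lborel. norm (std_char_error (M n) (p n) (sum_list (qs n)) (\<sigma> n) s))
      / (2 * pi) + 1 / \<sigma> n" for n
  have \<sigma>: "filterlim \<sigma> at_top sequentially"
    unfolding \<sigma>_def by (rule filterlim_compose[OF sqrt_at_top var])
  have "B \<longlonglongrightarrow> 0 / (2 * pi) + 0"
    unfolding B_def \<sigma>_def
    by (intro tendsto_add tendsto_divide std_char_error_integral_tendsto_0[OF qs char var]
        tendsto_divide_0[OF tendsto_const] filterlim_at_top_imp_at_infinity
        filterlim_compose[OF sqrt_at_top var]) simp_all
  then have "eventually (\<lambda>n. B n \<le> e) sequentially" if "0 < e" for e
    using order_tendstoD(2)[of B 0 sequentially e] that by (auto elim: eventually_mono)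
  moreover have \<sigma>_pos: "eventually (\<lambda>n. 0 < \<sigma> n) sequentially"
    using \<sigma> by (simp add: filterlim_at_top_dense)
  ultimately have "(\<lambda>n. SUP x::real. \<bar>\<sigma> n * p n \<lfloor>sum_list (qs n) + x * \<sigma> n\<rfloor>
      - (1 / sqrt (2 * pi)) * exp (- x\<^sup>2 / 2)\<bar>) \<longlonglongrightarrow> 0"
  proof (intro SUP_tendsto_0)
    fix e :: real assume "0 < e" "\<And>e. 0 < e \<Longrightarrow> eventually (\<lambda>n. B n \<le> e) sequentially"
    then have "eventually (\<lambda>n. B n \<le> e) sequentially" by blast
    with \<sigma>_pos show "eventually (\<lambda>n. \<forall>x. \<bar>\<sigma> n * p n \<lfloor>sum_list (qs n) + x * \<sigma> n\<rfloor>
      - (1 / sqrt (2 * pi)) * exp (- x\<^sup>2 / 2)\<bar> \<le> e) sequentially"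
    proof eventually_elim
      case (elim n)
      then show ?case using local_limit_bound[OF _ supp] unfolding B_def by (meson order_trans)
    qed
  qed simp
  then show ?thesis unfolding asymp_normal_LLT_def \<sigma>_def .
qed

section \<open>The central limit theorem\<close>

lemma monotone_approx_between:
  fixes F G :: "real \<Rightarrow> real"
  assumes "mono F" "mono G" "a \<le> x" "x \<le> b"
    and "\<bar>F a - G a\<bar> \<le> \<epsilon>" "\<bar>F b - G b\<bar> \<le> \<epsilon>" "G b - G a \<le> \<epsilon>"
  shows "\<bar>F x - G x\<bar> \<le> 2 * \<epsilon>"
  using assms monoD[OF \<open>mono F\<close> \<open>a \<le> x\<close>] monoD[OF \<open>mono F\<close> \<open>x \<le> b\<close>]
    monoD[OF \<open>mono G\<close> \<open>a \<le> x\<close>] monoD[OF \<open>mono G\<close> \<open>x \<le> b\<close>]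
  by (simp add: abs_le_iff)

lemma grid_small_oscillation:
  fixes G :: "real \<Rightarrow> real"
  assumes cont: "continuous_on {L..U} G" and LU: "L \<le> U" and \<epsilon>: "0 < \<epsilon>"
  obtains T where "finite T" "T \<subseteq> {L..U}"
    "\<And>x. x \<in> {L..U} \<Longrightarrow> \<exists>a\<in>T. \<exists>b\<in>T. a \<le> x \<and> x \<le> b \<and> G b - G a \<le> \<epsilon>"
proof -
  have "uniformly_continuous_on {L..U} G" using cont by (intro compact_uniformly_continuous) auto
  then obtain d where d: "0 < d"
    and osc: "\<And>x y. x \<in> {L..U} \<Longrightarrow> y \<in> {L..U} \<Longrightarrow> \<bar>y - x\<bar> < d \<Longrightarrow> \<bar>G y - G x\<bar> < \<epsilon>"
    unfolding uniformly_continuous_on_def dist_real_def using \<epsilon> by metis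
  define h where "h = d / 2"
  have h: "0 < h" "h < d" using d unfolding h_def by auto
  define m where "m = nat \<lceil>(U - L) / h\<rceil>"
  define t where "t i = min U (L + real i * h)" for i
  have t_in: "t i \<in> {L..U}" for i unfolding t_def using LU h by auto
  show ?thesis
  proof (rule that[of "t ` {..m + 1}"])
    show "finite (t ` {..m + 1})" "t ` {..m + 1} \<subseteq> {L..U}" using t_in by auto
    fix x assume x: "x \<in> {L..U}"
    define i where "i = nat \<lfloor>(x - L) / h\<rfloor>"
    have "real i = real_of_int \<lfloor>(x - L) / h\<rfloor>" unfolding i_def using x h by simp
    then have "real i \<le> (x - L) / h" "(x - L) / h < real i + 1" by linarith+
    then have i_lower: "real i * h \<le> x - L" and i_upper: "x - L < (real i + 1) * h"
      using h by (simp_all add: le_divide_eq divide_less_eq)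
    have "(x - L) / h \<le> (U - L) / h" using x h by (simp add: divide_right_mono)
    then have "i \<le> m" unfolding i_def m_def by (meson ceiling_mono floor_le_ceiling nat_mono order_trans)
    have ti: "t i = L + real i * h" unfolding t_def using i_lower x by simp
    have "x \<le> t (i + 1)" "t (i + 1) \<le> L + real (i + 1) * h"
      unfolding t_def using i_upper x by (simp_all add: algebra_simps)
    moreover have "t i \<le> x" using ti i_lower by simp
    moreover have "\<bar>G (t (i + 1)) - G (t i)\<bar> < \<epsilon>"
      using calculation ti h by (intro osc t_in) (simp add: algebra_simps)
    moreover have "t i \<in> t ` {..m + 1}" "t (i + 1) \<in> t ` {..m + 1}" using \<open>i \<le> m\<close> by auto
    ultimately show "\<exists>a\<in>t ` {..m + 1}. \<exists>b\<in>t ` {..m + 1}. a \<le> x \<and> x \<le> b \<and> G b - G a \<le> \<epsilon>"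
      by force
  qed
qed

lemma monotone_approx_from_grid:
  fixes F G :: "real \<Rightarrow> real"
  assumes F: "mono F" "\<And>x. 0 \<le> F x \<and> F x \<le> 1" and G: "mono G" "\<And>x. 0 \<le> G x \<and> G x \<le> 1"
    and L: "\<And>x. x \<le> L \<Longrightarrow> G x \<le> \<epsilon>" and U: "\<And>x. U \<le> x \<Longrightarrow> 1 - \<epsilon> \<le> G x"
    and grid: "\<And>x. x \<in> {L..U} \<Longrightarrow> \<exists>a\<in>T. \<exists>b\<in>T. a \<le> x \<and> x \<le> b \<and> G b - G a \<le> \<epsilon>"
    and T: "L \<in> T" "U \<in> T" "\<forall>y\<in>T. \<bar>F y - G y\<bar> \<le> \<epsilon>"
  shows "\<bar>F x - G x\<bar> \<le> 2 * \<epsilon>"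
proof -
  consider "x < L" | "U < x" | "x \<in> {L..U}" by force
  then show ?thesis
  proof cases
    case 1
    then have "F x \<le> F L" using F(1) by (simp add: monoD)
    then show ?thesis using T L[of L] L[of x] F(2)[of x] G(2)[of x] 1 by (auto simp: abs_le_iff)
  next
    case 2
    then have "F U \<le> F x" using F(1) by (simp add: monoD)
    then show ?thesis using T U[of U] U[of x] F(2)[of x] G(2)[of x] 2 by (auto simp: abs_le_iff)
  next
    case 3
    then obtain a b where "a \<in> T" "b \<in> T" "a \<le> x" "x \<le> b" "G b - G a \<le> \<epsilon>" using grid by blast
    then show ?thesis using monotone_approx_between[OF F(1) G(1), of a x b \<epsilon>] T by simp
  qed
qed

lemma polya_uniform_convergence:
  fixes F :: "nat \<Rightarrow> real \<Rightarrow> real" and G :: "real \<Rightarrow> real"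
  assumes F_mono: "\<And>n. mono (F n)" and F_01: "\<And>n x. 0 \<le> F n x \<and> F n x \<le> 1"
    and G_cont: "\<And>x. isCont G x" and G_mono: "mono G" and G_01: "\<And>x. 0 \<le> G x \<and> G x \<le> 1"
    and G_bot: "(G \<longlongrightarrow> 0) at_bot" and G_top: "(G \<longlongrightarrow> 1) at_top"
    and conv: "\<And>x. (\<lambda>n. F n x) \<longlonglongrightarrow> G x"
    and e: "0 < e"
  shows "eventually (\<lambda>n. \<forall>x. \<bar>F n x - G x\<bar> \<le> e) sequentially"
proof -
  define \<epsilon> where "\<epsilon> = e / 2"
  have \<epsilon>: "0 < \<epsilon>" using e unfolding \<epsilon>_def by simp
  obtain L where L: "\<And>x. x \<le> L \<Longrightarrow> G x \<le> \<epsilon>"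
    using order_tendstoD(2)[OF G_bot \<epsilon>] unfolding eventually_at_bot_linorder by (auto intro: less_imp_le)
  obtain U where LU: "L \<le> U" and U: "\<And>x. U \<le> x \<Longrightarrow> 1 - \<epsilon> \<le> G x"
  proof -
    obtain U0 where "\<And>x. U0 \<le> x \<Longrightarrow> 1 - \<epsilon> < G x"
      using order_tendstoD(1)[OF G_top, of "1 - \<epsilon>"] \<epsilon> unfolding eventually_at_top_linorder by auto
    then show ?thesis by (intro that[of "max U0 L"]) (auto intro: less_imp_le)
  qed
  obtain T where T: "finite T" "T \<subseteq> {L..U}"
    and grid: "\<And>x. x \<in> {L..U} \<Longrightarrow> \<exists>a\<in>T. \<exists>b\<in>T. a \<le> x \<and> x \<le> b \<and> G b - G a \<le> \<epsilon>"
    using grid_small_oscillation[OF _ LU \<epsilon>] G_cont by (metis continuous_at_imp_continuous_on)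
  have "L \<in> T" "U \<in> T" using grid[of L] grid[of U] T(2) LU by force+
  have "eventually (\<lambda>n. \<bar>F n y - G y\<bar> \<le> \<epsilon>) sequentially" for y
    using tendstoD[OF conv[of y] \<epsilon>] by (auto simp: dist_real_def elim!: eventually_mono)
  then have "\<forall>y\<in>T. eventually (\<lambda>n. \<bar>F n y - G y\<bar> \<le> \<epsilon>) sequentially" by blast
  then have "eventually (\<lambda>n. \<forall>y\<in>T. \<bar>F n y - G y\<bar> \<le> \<epsilon>) sequentially"
    by (rule eventually_ball_finite[OF T(1)])
  then show ?thesis
  proof eventually_elim
    case (elim n)
    then show ?case
      using monotone_approx_from_grid[OF F_mono[of n] F_01[of n] G_mono G_01 L U grid \<open>L \<in> T\<close> \<open>U \<in> T\<close> elim]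
      unfolding \<epsilon>_def by simp
  qed
qed

lemma cdf_std_normal_eq:
  "cdf std_normal_distribution x = (1 / sqrt (2 * pi)) * (LBINT t:{..x}. exp (- t\<^sup>2 / 2))"
proof -
  have int: "integrable lborel (\<lambda>t. indicator {..x} t *\<^sub>R std_normal_density t)"
    using integrable_std_normal_moment[of 0] by (intro integrable_mult_indicator) auto
  have "emeasure std_normal_distribution {..x}
      = (\<integral>\<^sup>+ t. ennreal (indicator {..x} t *\<^sub>R std_normal_density t) \<partial>lborel)"
    by (subst emeasure_density) (auto intro!: nn_integral_cong simp: indicator_def)
  also have "\<dots> = ennreal (LBINT t:{..x}. std_normal_density t)"
    unfolding set_lebesgue_integral_def
    using int by (intro nn_integral_eq_integral) (auto simp: normal_density_nonneg)
  finally have "cdf std_normal_distribution x = (LBINT t:{..x}. std_normal_density t)"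
    unfolding cdf_def measure_def
    by (simp add: set_lebesgue_integral_def integral_nonneg_AE normal_density_nonneg)
  also have "\<dots> = (1 / sqrt (2 * pi)) * (LBINT t:{..x}. exp (- t\<^sup>2 / 2))"
    by (simp add: std_normal_density_def set_integral_mult_right)
  finally show ?thesis .
qed

lemma isCont_cdf_std_normal: "isCont (cdf std_normal_distribution) x"
proof -
  interpret real_distribution std_normal_distribution by (rule real_dist_normal_dist)
  have "emeasure std_normal_distribution {x} = 0"
    by (subst emeasure_density) (auto simp: nn_integral_indicator_singleton')
  then show ?thesis using isCont_cdf by (simp add: measure_def)
qed

definition std_distr :: "(int \<Rightarrow> real) \<Rightarrow> real \<Rightarrow> real \<Rightarrow> real measure" where
  "std_distr p \<mu> \<sigma> = distr (measure_pmf (embed_pmf p)) borel (\<lambda>k. (real_of_int k - \<mu>) / \<sigma>)"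

context
  fixes M :: nat and p :: "int \<Rightarrow> real"
  assumes nonneg: "\<And>k. 0 \<le> p k" and supp: "\<And>k. k < 0 \<or> k > int M \<Longrightarrow> p k = 0"
    and sum_1: "(\<Sum>j\<le>M. p (int j)) = 1"
begin

lemma nn_integral_dist_eq_1: "(\<integral>\<^sup>+k. ennreal (p k) \<partial>count_space UNIV) = 1"
proof -
  have range: "int ` {..M} = {k. 0 \<le> k \<and> k \<le> int M}"
    by (auto intro!: image_eqI[of _ int "nat _"])
  have "(\<integral>\<^sup>+k. ennreal (p k) \<partial>count_space UNIV) = (\<Sum>k\<in>int ` {..M}. ennreal (p k))"
    by (rule nn_integral_count_space') (use supp in \<open>auto simp: range not_le\<close>)
  also have "\<dots> = ennreal (\<Sum>j\<le>M. p (int j))" using nonneg by (simp add: sum_ennreal sum.reindex)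
  finally show ?thesis using sum_1 by simp
qed

lemma pmf_embed_dist: "pmf (embed_pmf p) k = p k"
  by (rule pmf_embed_pmf[OF nonneg nn_integral_dist_eq_1])

lemma set_pmf_embed_dist: "set_pmf (embed_pmf p) \<subseteq> int ` {..M}"
proof
  fix k assume "k \<in> set_pmf (embed_pmf p)"
  then have "0 \<le> k \<and> k \<le> int M" using supp set_embed_pmf[OF nonneg nn_integral_dist_eq_1] by force
  then show "k \<in> int ` {..M}" by (auto intro!: image_eqI[of _ int "nat k"])
qed

lemma real_distribution_std_distr: "real_distribution (std_distr p \<mu> \<sigma>)"
  unfolding real_distribution_def real_distribution_axioms_def std_distr_def
  by (auto intro!: measure_pmf.prob_space_distr simp: measurable_pmf_measure1)

lemma char_std_distr: "char (std_distr p \<mu> \<sigma>) t = std_char M p \<mu> \<sigma> t"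
proof -
  have "char (std_distr p \<mu> \<sigma>) t = (CLINT k|measure_pmf (embed_pmf p). iexp (t * ((real_of_int k - \<mu>) / \<sigma>)))"
    unfolding char_def std_distr_def by (subst integral_distr) (auto simp: measurable_pmf_measure1)
  also have "\<dots> = (\<Sum>a\<in>int ` {..M}. pmf (embed_pmf p) a *\<^sub>R iexp (t * ((real_of_int a - \<mu>) / \<sigma>)))"
    by (rule integral_measure_pmf) (use set_pmf_embed_dist in auto)
  also have "\<dots> = std_char M p \<mu> \<sigma> t"
    unfolding std_char_def by (simp add: sum.reindex pmf_embed_dist scaleR_conv_of_real algebra_simps)
  finally show ?thesis .
qed

lemma cdf_std_distr:
  assumes \<sigma>: "0 < \<sigma>"
  shows "cdf (std_distr p \<mu> \<sigma>) x = (\<Sum>k\<in>{k. k \<le> M \<and> real k \<le> \<mu> + x * \<sigma>}. p (int k))"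
proof -
  have "cdf (std_distr p \<mu> \<sigma>) x = measure_pmf.prob (embed_pmf p) {k. (real_of_int k - \<mu>) / \<sigma> \<le> x}"
    unfolding cdf_def std_distr_def by (subst measure_distr) (auto simp: measurable_pmf_measure1 vimage_def)
  also have "\<dots> = measure_pmf.prob (embed_pmf p) (int ` {k. k \<le> M \<and> real k \<le> \<mu> + x * \<sigma>})"
  proof -
    have "{k. (real_of_int k - \<mu>) / \<sigma> \<le> x} \<inter> set_pmf (embed_pmf p)
        = int ` {k. k \<le> M \<and> real k \<le> \<mu> + x * \<sigma>} \<inter> set_pmf (embed_pmf p)"
      using set_pmf_embed_dist \<sigma> by (auto simp: pos_divide_le_eq algebra_simps)
    then show ?thesis by (metis measure_Int_set_pmf)
  qed
  also have "\<dots> = (\<Sum>k\<in>{k. k \<le> M \<and> real k \<le> \<mu> + x * \<sigma>}. p (int k))"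
    by (subst measure_measure_pmf_finite) (auto simp: sum.reindex pmf_embed_dist)
  finally show ?thesis .
qed

end

lemma char_std_distr_tendsto:
  fixes M :: "nat \<Rightarrow> nat" and p :: "nat \<Rightarrow> int \<Rightarrow> real" and qs :: "nat \<Rightarrow> real list"
  assumes nonneg: "\<And>n k. 0 \<le> p n k" and supp: "\<And>n k. k < 0 \<or> k > int (M n) \<Longrightarrow> p n k = 0"
    and sum_1: "\<And>n. (\<Sum>j\<le>M n. p n (int j)) = 1"
    and qs: "\<And>n q. q \<in> set (qs n) \<Longrightarrow> 0 \<le> q \<and> q \<le> 1"
    and char: "\<And>n t. (\<Sum>j\<le>M n. complex_of_real (p n (int j)) * iexp (real j * t)) = pb_char (qs n) t"
    and var: "filterlim (\<lambda>n. pb_var (qs n)) at_top sequentially"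
  shows "(\<lambda>n. char (std_distr (p n) (sum_list (qs n)) (sqrt (pb_var (qs n)))) t)
    \<longlonglongrightarrow> char std_normal_distribution t"
proof -
  define \<sigma> where "\<sigma> n = sqrt (pb_var (qs n))" for n
  have \<sigma>: "filterlim \<sigma> at_top sequentially"
    unfolding \<sigma>_def by (rule filterlim_compose[OF sqrt_at_top var])
  have "(\<lambda>n. std_char (M n) (p n) (sum_list (qs n)) (\<sigma> n) t - complex_of_real (exp (- t\<^sup>2/2))) \<longlonglongrightarrow> 0"
  proof (rule Lim_null_comparison)
    have "eventually (\<lambda>n. max 1 \<bar>t\<bar> \<le> \<sigma> n) sequentially"
      using \<sigma> unfolding filterlim_at_top by blast
    then show "eventually (\<lambda>n. norm (std_char (M n) (p n) (sum_list (qs n)) (\<sigma> n) t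
        - complex_of_real (exp (- t\<^sup>2/2))) \<le> \<bar>t\<bar>^3 / \<sigma> n) sequentially"
      by eventually_elim (rule std_char_close_gaussian[OF qs char], auto simp: \<sigma>_def)
    show "(\<lambda>n. \<bar>t\<bar>^3 / \<sigma> n) \<longlonglongrightarrow> 0"
      by (rule tendsto_divide_0[OF tendsto_const filterlim_at_top_imp_at_infinity[OF \<sigma>]])
  qed
  then have "(\<lambda>n. std_char (M n) (p n) (sum_list (qs n)) (\<sigma> n) t) \<longlonglongrightarrow> complex_of_real (exp (- t\<^sup>2/2))"
    by (rule LIM_zero_cancel)
  moreover have "char (std_distr (p n) (sum_list (qs n)) (\<sigma> n)) t = std_char (M n) (p n) (sum_list (qs n)) (\<sigma> n) t"
    for n by (rule char_std_distr) (use nonneg supp sum_1 in auto)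
  ultimately show ?thesis unfolding \<sigma>_def by (simp add: char_std_normal_distribution)
qed

lemma uniform_cdf_convergence_std_normal:
  assumes D: "\<And>n. real_distribution (D n)" and conv: "weak_conv_m D std_normal_distribution" and e: "0 < e"
  shows "eventually (\<lambda>n. \<forall>x. \<bar>cdf (D n) x - cdf std_normal_distribution x\<bar> \<le> e) sequentially"
proof -
  have D_mono: "mono (cdf (D n))" and D_01: "0 \<le> cdf (D n) x \<and> cdf (D n) x \<le> 1" for n x
  proof -
    interpret real_distribution "D n" by (rule D)
    show "mono (cdf (D n))" by (intro monoI cdf_nondecreasing)
    show "0 \<le> cdf (D n) x \<and> cdf (D n) x \<le> 1" using cdf_nonneg cdf_bounded_prob by auto
  qed
  interpret N: real_distribution std_normal_distribution by (rule real_dist_normal_dist)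
  have "(\<lambda>n. cdf (D n) x) \<longlonglongrightarrow> cdf std_normal_distribution x" for x
    using conv isCont_cdf_std_normal unfolding weak_conv_m_def weak_conv_def by blast
  then show ?thesis
    using D_mono D_01 isCont_cdf_std_normal N.cdf_lim_at_bot N.cdf_lim_at_top_prob e
    by (intro polya_uniform_convergence) (auto intro: monoI N.cdf_nondecreasing N.cdf_nonneg N.cdf_bounded_prob)
qed

theorem pb_central_limit:
  fixes M :: "nat \<Rightarrow> nat" and p :: "nat \<Rightarrow> int \<Rightarrow> real" and qs :: "nat \<Rightarrow> real list"
  assumes nonneg: "\<And>n k. 0 \<le> p n k" and supp: "\<And>n k. k < 0 \<or> k > int (M n) \<Longrightarrow> p n k = 0"
    and sum_1: "\<And>n. (\<Sum>j\<le>M n. p n (int j)) = 1"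
    and qs: "\<And>n q. q \<in> set (qs n) \<Longrightarrow> 0 \<le> q \<and> q \<le> 1"
    and char: "\<And>n t. (\<Sum>j\<le>M n. complex_of_real (p n (int j)) * iexp (real j * t)) = pb_char (qs n) t"
    and var: "filterlim (\<lambda>n. pb_var (qs n)) at_top sequentially"
  shows "asymp_normal_CLT M p (\<lambda>n. sum_list (qs n)) (\<lambda>n. sqrt (pb_var (qs n)))"
proof -
  define \<sigma> where "\<sigma> n = sqrt (pb_var (qs n))" for n
  define D where "D n = std_distr (p n) (sum_list (qs n)) (\<sigma> n)" for n
  have D: "real_distribution (D n)" for n
    unfolding D_def by (rule real_distribution_std_distr[OF nonneg supp sum_1])
  have "weak_conv_m D std_normal_distribution"
    by (rule levy_continuity[OF D real_dist_normal_dist])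
      (unfold D_def \<sigma>_def, rule char_std_distr_tendsto[OF nonneg supp sum_1 qs char var])
  note uniform = uniform_cdf_convergence_std_normal[OF D this]
  have "filterlim \<sigma> at_top sequentially"
    unfolding \<sigma>_def by (rule filterlim_compose[OF sqrt_at_top var])
  then have "eventually (\<lambda>n. 0 < \<sigma> n) sequentially" by (simp add: filterlim_at_top_dense)
  then have cdf_D: "eventually (\<lambda>n. \<forall>x. cdf (D n) x = (\<Sum>k\<in>{k. k \<le> M n \<and> real k \<le> sum_list (qs n) + x * \<sigma> n}. p n (int k)))
      sequentially"
    unfolding D_def by (auto elim!: eventually_mono intro: cdf_std_distr[OF nonneg supp sum_1])
  have "(\<lambda>n. SUP x::real. \<bar>(\<Sum>k\<in>{k. k \<le> M n \<and> real k \<le> sum_list (qs n) + x * \<sigma> n}. p n (int k))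
      - cdf std_normal_distribution x\<bar>) \<longlonglongrightarrow> 0"
  proof (rule SUP_tendsto_0)
    fix e :: real assume "0 < e"
    from uniform[OF this] cdf_D show "eventually (\<lambda>n. \<forall>x. \<bar>(\<Sum>k\<in>{k. k \<le> M n \<and> real k \<le> sum_list (qs n) + x * \<sigma> n}. p n (int k))
      - cdf std_normal_distribution x\<bar> \<le> e) sequentially"
      by eventually_elim auto
  qed simp
  then show ?thesis unfolding asymp_normal_CLT_def cdf_std_normal_eq std_normal_cdf_def \<sigma>_def .
qed

section \<open>Coefficients of real-rooted polynomials\<close>

definition neg_roots_poly :: "real list \<Rightarrow> real poly" where
  "neg_roots_poly rs = prod_list (map (\<lambda>r. [:r, 1:]) rs)"

definition coeff_mass :: "real list \<Rightarrow> real" where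
  "coeff_mass rs = prod_list (map (\<lambda>r. 1 + r) rs)"

lemma coeff_neg_roots_poly_Cons:
  "coeff (neg_roots_poly (r # rs)) k
    = r * coeff (neg_roots_poly rs) k + (if k = 0 then 0 else coeff (neg_roots_poly rs) (k - 1))"
  by (cases k) (simp_all add: neg_roots_poly_def mult_pCons_left)

lemma coeff_neg_roots_poly_eq_0: "length rs < k \<Longrightarrow> coeff (neg_roots_poly rs) k = 0"
proof (induction rs arbitrary: k)
  case Nil then show ?case by (simp add: neg_roots_poly_def)
next
  case (Cons r rs) then show ?case by (simp add: coeff_neg_roots_poly_Cons)
qed

lemma coeff_neg_roots_poly_nonneg: "(\<And>r. r \<in> set rs \<Longrightarrow> 0 \<le> r) \<Longrightarrow> 0 \<le> coeff (neg_roots_poly rs) k"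
proof (induction rs arbitrary: k)
  case Nil then show ?case by (simp add: neg_roots_poly_def coeff_1)
next
  case (Cons r rs) then show ?case by (simp add: coeff_neg_roots_poly_Cons)
qed

lemma coeff_neg_roots_poly_eq_signed:
  "coeff (neg_roots_poly rs) k = (-1) ^ (length rs + k) * coeff (prod_list (map (\<lambda>r. [:- r, 1:]) rs)) k"
proof (induction rs arbitrary: k)
  case Nil then show ?case by (cases k) (simp_all add: neg_roots_poly_def coeff_1)
next
  case (Cons r rs)
  let ?P = "prod_list (map (\<lambda>r. [:- r, 1:]) rs)"
  have expand: "prod_list (map (\<lambda>r. [:- r, 1:]) (r # rs)) = Polynomial.smult (- r) ?P + pCons 0 ?P"
    by (simp add: mult_pCons_left)
  show ?case
  proof (cases k)
    case 0
    then show ?thesis unfolding expand using Cons.IH[of 0] by (simp add: coeff_neg_roots_poly_Cons)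
  next
    case (Suc m)
    have "(-1::real) ^ (length (r # rs) + k) = - ((-1) ^ (length rs + k))"
      and "(-1::real) ^ (length (r # rs) + k) = (-1) ^ (length rs + m)" using Suc by simp_all
    then show ?thesis unfolding expand using Cons.IH[of k] Cons.IH[of m] Suc
      by (simp add: coeff_neg_roots_poly_Cons algebra_simps)
  qed
qed

lemma sum_coeff_neg_roots_poly_Cons:
  fixes f :: "nat \<Rightarrow> 'a::{real_algebra_1, comm_ring_1}"
  shows "(\<Sum>k\<le>Suc (length rs). f k * of_real (coeff (neg_roots_poly (r # rs)) k))
       = of_real r * (\<Sum>k\<le>length rs. f k * of_real (coeff (neg_roots_poly rs) k))
         + (\<Sum>k\<le>length rs. f (Suc k) * of_real (coeff (neg_roots_poly rs) k))"
proof -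
  let ?c = "coeff (neg_roots_poly rs)"
  have "(\<Sum>k\<le>Suc (length rs). f k * of_real (coeff (neg_roots_poly (r # rs)) k))
      = (\<Sum>k\<le>Suc (length rs). of_real r * (f k * of_real (?c k)))
        + (\<Sum>k\<le>Suc (length rs). f k * of_real (if k = 0 then 0 else ?c (k - 1)))"
    unfolding coeff_neg_roots_poly_Cons by (simp add: sum.distrib algebra_simps)
  also have "(\<Sum>k\<le>Suc (length rs). of_real r * (f k * of_real (?c k)))
      = of_real r * (\<Sum>k\<le>length rs. f k * of_real (?c k))"
    by (simp add: sum_distrib_left coeff_neg_roots_poly_eq_0)
  also have "(\<Sum>k\<le>Suc (length rs). f k * of_real (if k = 0 then 0 else ?c (k - 1)))
      = (\<Sum>k\<le>length rs. f (Suc k) * of_real (?c k))"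
    by (subst sum.atMost_Suc_shift) simp
  finally show ?thesis .
qed

lemma sum_coeff_neg_roots_poly: "(\<Sum>k\<le>length rs. coeff (neg_roots_poly rs) k) = coeff_mass rs"
proof (induction rs)
  case Nil then show ?case by (simp add: neg_roots_poly_def coeff_mass_def)
next
  case (Cons r rs)
  have "(\<Sum>k\<le>length (r # rs). coeff (neg_roots_poly (r # rs)) k)
      = r * (\<Sum>k\<le>length rs. coeff (neg_roots_poly rs) k) + (\<Sum>k\<le>length rs. coeff (neg_roots_poly rs) k)"
    using sum_coeff_neg_roots_poly_Cons[where f = "\<lambda>_. 1::real" and r = r and rs = rs] by simp
  then show ?case using Cons by (simp add: coeff_mass_def algebra_simps)
qed

lemma generating_neg_roots_poly:
  fixes z :: complex
  shows "(\<Sum>k\<le>length rs. z ^ k * complex_of_real (coeff (neg_roots_poly rs) k))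
    = prod_list (map (\<lambda>r. complex_of_real r + z) rs)"
proof (induction rs)
  case Nil then show ?case by (simp add: neg_roots_poly_def)
next
  case (Cons r rs)
  have "(\<Sum>k\<le>length (r # rs). z ^ k * complex_of_real (coeff (neg_roots_poly (r # rs)) k))
      = complex_of_real r * (\<Sum>k\<le>length rs. z ^ k * complex_of_real (coeff (neg_roots_poly rs) k))
        + z * (\<Sum>k\<le>length rs. z ^ k * complex_of_real (coeff (neg_roots_poly rs) k))"
    using sum_coeff_neg_roots_poly_Cons[where f = "\<lambda>k. z ^ k" and rs = rs and r = r]
    by (simp add: sum_distrib_left mult.assoc)
  then show ?case using Cons by (simp add: algebra_simps)
qed

text \<open>
  Harper's observation: if all \<open>r\<^sub>i \<ge> 0\<close>, the normalised coefficients of \<open>\<Prod>i. (x + r\<^sub>i)\<close> form the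
  distribution of a sum of independent Bernoulli variables with parameters \<open>1/(1 + r\<^sub>i)\<close>.
\<close>

definition pb_params :: "real list \<Rightarrow> real list" where
  "pb_params rs = map (\<lambda>r. 1 / (1 + r)) rs"

definition coeff_dist :: "real list \<Rightarrow> int \<Rightarrow> real" where
  "coeff_dist rs k = (if 0 \<le> k \<and> k \<le> int (length rs)
     then coeff (neg_roots_poly rs) (nat k) / coeff_mass rs else 0)"

lemma coeff_mass_pos: "(\<And>r. r \<in> set rs \<Longrightarrow> 0 \<le> r) \<Longrightarrow> 0 < coeff_mass rs"
  unfolding coeff_mass_def by (induction rs) (auto intro!: mult_pos_pos simp: add_pos_nonneg)

lemma pb_params_bounds: "(\<And>r. r \<in> set rs \<Longrightarrow> 0 \<le> r) \<Longrightarrow> q \<in> set (pb_params rs) \<Longrightarrow> 0 \<le> q \<and> q \<le> 1"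
  unfolding pb_params_def by (force simp: divide_le_eq)

lemma pb_var_pb_params_Cons:
  "pb_var (pb_params (r # rs)) = 1 / (1 + r) * (1 - 1 / (1 + r)) + pb_var (pb_params rs)"
  by (simp add: pb_params_def pb_var_def)

lemma pb_var_pb_params:
  "(\<And>r. r \<in> set rs \<Longrightarrow> 0 \<le> r) \<Longrightarrow> pb_var (pb_params rs) = sum_list (map (\<lambda>r. r / (1 + r)\<^sup>2) rs)"
proof (induction rs)
  case Nil then show ?case by (simp add: pb_var_def pb_params_def)
next
  case (Cons r rs)
  have "0 \<le> r" using Cons.prems by simp
  then have "1 / (1 + r) * (1 - 1 / (1 + r)) = r / (1 + r)\<^sup>2" by (simp add: field_simps power2_eq_square)
  then show ?case using Cons by (simp add: pb_var_pb_params_Cons)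
qed

lemma first_moment_neg_roots_poly:
  "(\<And>r. r \<in> set rs \<Longrightarrow> 0 \<le> r) \<Longrightarrow>
    (\<Sum>k\<le>length rs. real k * coeff (neg_roots_poly rs) k) = coeff_mass rs * sum_list (pb_params rs)"
proof (induction rs)
  case Nil then show ?case by (simp add: neg_roots_poly_def coeff_mass_def pb_params_def)
next
  case (Cons r rs)
  have "(\<Sum>k\<le>length (r # rs). real k * coeff (neg_roots_poly (r # rs)) k)
      = r * (\<Sum>k\<le>length rs. real k * coeff (neg_roots_poly rs) k)
        + (\<Sum>k\<le>length rs. real k * coeff (neg_roots_poly rs) k) + (\<Sum>k\<le>length rs. coeff (neg_roots_poly rs) k)"
    using sum_coeff_neg_roots_poly_Cons[where f = real and r = r and rs = rs]
    by (simp add: sum.distrib algebra_simps)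
  also have "\<dots> = (1 + r) * coeff_mass rs * sum_list (pb_params rs) + coeff_mass rs"
    using Cons by (simp add: sum_coeff_neg_roots_poly algebra_simps)
  also have "\<dots> = coeff_mass (r # rs) * sum_list (pb_params (r # rs))"
  proof -
    have "0 \<le> r" using Cons.prems by simp
    then have "1 + r \<noteq> 0" by simp
    then show ?thesis by (simp add: coeff_mass_def pb_params_def field_simps)
  qed
  finally show ?case .
qed

lemma second_moment_neg_roots_poly:
  "(\<And>r. r \<in> set rs \<Longrightarrow> 0 \<le> r) \<Longrightarrow>
    (\<Sum>k\<le>length rs. (real k)\<^sup>2 * coeff (neg_roots_poly rs) k)
      = coeff_mass rs * ((sum_list (pb_params rs))\<^sup>2 + pb_var (pb_params rs))"
proof (induction rs)
  case Nil then show ?case by (simp add: neg_roots_poly_def coeff_mass_def pb_params_def pb_var_def)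
next
  case (Cons r rs)
  define a P \<mu> v where "a = 1 / (1 + r)" and "P = coeff_mass rs" and "\<mu> = sum_list (pb_params rs)"
    and "v = pb_var (pb_params rs)"
  have "0 \<le> r" using Cons.prems by simp
  then have a: "(1 + r) * a = 1" unfolding a_def by simp
  have "(\<Sum>k\<le>length (r # rs). (real k)\<^sup>2 * coeff (neg_roots_poly (r # rs)) k)
      = r * (\<Sum>k\<le>length rs. (real k)\<^sup>2 * coeff (neg_roots_poly rs) k)
        + (\<Sum>k\<le>length rs. (real k)\<^sup>2 * coeff (neg_roots_poly rs) k)
        + 2 * (\<Sum>k\<le>length rs. real k * coeff (neg_roots_poly rs) k) + (\<Sum>k\<le>length rs. coeff (neg_roots_poly rs) k)"
    using sum_coeff_neg_roots_poly_Cons[where f = "\<lambda>k. (real k)\<^sup>2" and r = r and rs = rs]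
    by (simp add: sum.distrib sum_distrib_left power2_eq_square algebra_simps)
  also have "\<dots> = (1 + r) * P * (\<mu>\<^sup>2 + v) + ((1 + r) * a) * P * (2 * \<mu> + 1)"
    using Cons first_moment_neg_roots_poly[of rs] unfolding P_def \<mu>_def v_def a
    by (simp add: sum_coeff_neg_roots_poly algebra_simps)
  also have "\<dots> = (1 + r) * P * ((a + \<mu>)\<^sup>2 + (a * (1 - a) + v))"
    by (simp add: power2_eq_square algebra_simps)
  also have "(1 + r) * P = coeff_mass (r # rs)" unfolding P_def by (simp add: coeff_mass_def)
  also have "a + \<mu> = sum_list (pb_params (r # rs))" unfolding a_def \<mu>_def by (simp add: pb_params_def)
  also have "a * (1 - a) + v = pb_var (pb_params (r # rs))" unfolding a_def v_def pb_var_pb_params_Cons ..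
  finally show ?case .
qed

lemma prod_plus_eq_pb_char_factors:
  fixes z :: complex
  assumes "\<And>r. r \<in> set rs \<Longrightarrow> 0 \<le> r"
  shows "prod_list (map (\<lambda>r. complex_of_real r + z) rs)
    = complex_of_real (coeff_mass rs)
      * prod_list (map (\<lambda>q. 1 - complex_of_real q + complex_of_real q * z) (pb_params rs))"
  using assms
proof (induction rs)
  case Nil then show ?case by (simp add: coeff_mass_def pb_params_def)
next
  case (Cons r rs)
  define a where "a = complex_of_real (1 / (1 + r))"
  have "0 \<le> r" using Cons.prems by simp
  then have "(1 + r) * (1 / (1 + r)) = 1" by simp
  then have a: "complex_of_real (1 + r) * a = 1" unfolding a_def by (metis of_real_1 of_real_mult)
  have "complex_of_real (1 + r) * (1 - a + a * z)
      = complex_of_real (1 + r) - complex_of_real (1 + r) * a + (complex_of_real (1 + r) * a) * z"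
    by (simp add: algebra_simps)
  then have "complex_of_real r + z = complex_of_real (1 + r) * (1 - a + a * z)"
    unfolding a by simp
  then show ?case using Cons by (simp add: coeff_mass_def pb_params_def a_def)
qed

context
  fixes rs :: "real list"
  assumes nonneg: "\<And>r. r \<in> set rs \<Longrightarrow> 0 \<le> r"
begin

lemma coeff_dist_nonneg: "0 \<le> coeff_dist rs k"
  unfolding coeff_dist_def using coeff_neg_roots_poly_nonneg[where rs = rs, OF nonneg] coeff_mass_pos[where rs = rs, OF nonneg] by simp

lemma coeff_dist_eq_0: "k < 0 \<or> k > int (length rs) \<Longrightarrow> coeff_dist rs k = 0"
  unfolding coeff_dist_def by auto

lemma coeff_dist_of_nat: "j \<le> length rs \<Longrightarrow> coeff_dist rs (int j) = coeff (neg_roots_poly rs) j / coeff_mass rs"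
  unfolding coeff_dist_def by simp

lemma sum_coeff_dist: "(\<Sum>j\<le>length rs. coeff_dist rs (int j)) = 1"
  using sum_coeff_neg_roots_poly[of rs] coeff_mass_pos[where rs = rs, OF nonneg]
  by (simp add: coeff_dist_of_nat sum_divide_distrib[symmetric])

lemma mean_coeff_dist: "(\<Sum>k\<le>length rs. real k * coeff_dist rs (int k)) = sum_list (pb_params rs)"
  using first_moment_neg_roots_poly[where rs = rs, OF nonneg] coeff_mass_pos[where rs = rs, OF nonneg]
  by (simp add: coeff_dist_of_nat sum_divide_distrib[symmetric])

lemma variance_coeff_dist:
  "(\<Sum>k\<le>length rs. (real k - sum_list (pb_params rs))\<^sup>2 * coeff_dist rs (int k)) = pb_var (pb_params rs)"
proof -
  define \<mu> where "\<mu> = sum_list (pb_params rs)"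
  let ?c = "coeff (neg_roots_poly rs)"
  have "(\<Sum>k\<le>length rs. (real k - \<mu>)\<^sup>2 * coeff_dist rs (int k)) = (\<Sum>k\<le>length rs. (real k - \<mu>)\<^sup>2 * ?c k) / coeff_mass rs"
    by (simp add: coeff_dist_of_nat sum_divide_distrib)
  also have "(\<Sum>k\<le>length rs. (real k - \<mu>)\<^sup>2 * ?c k)
     = (\<Sum>k\<le>length rs. (real k)\<^sup>2 * ?c k) - 2 * \<mu> * (\<Sum>k\<le>length rs. real k * ?c k) + \<mu>\<^sup>2 * (\<Sum>k\<le>length rs. ?c k)"
  proof -
    have "(real k - \<mu>)\<^sup>2 * ?c k = (real k)\<^sup>2 * ?c k - 2 * \<mu> * (real k * ?c k) + \<mu>\<^sup>2 * ?c k" for k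
      by (simp add: power2_eq_square algebra_simps)
    then show ?thesis by (simp add: sum.distrib sum_subtractf sum_distrib_left)
  qed
  also have "\<dots> = coeff_mass rs * pb_var (pb_params rs)"
    using first_moment_neg_roots_poly[of rs] second_moment_neg_roots_poly[of rs] nonneg
    unfolding sum_coeff_neg_roots_poly \<mu>_def[symmetric] by (simp add: power2_eq_square algebra_simps)
  finally show ?thesis unfolding \<mu>_def using coeff_mass_pos[where rs = rs, OF nonneg] by simp
qed

lemma char_coeff_dist:
  "(\<Sum>j\<le>length rs. complex_of_real (coeff_dist rs (int j)) * iexp (real j * t)) = pb_char (pb_params rs) t"
proof -
  have "(\<Sum>j\<le>length rs. complex_of_real (coeff_dist rs (int j)) * iexp (real j * t))
      = (\<Sum>j\<le>length rs. iexp t ^ j * complex_of_real (coeff (neg_roots_poly rs) j))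
        / complex_of_real (coeff_mass rs)"
    by (simp add: coeff_dist_of_nat sum_divide_distrib exp_of_nat_mult[symmetric] algebra_simps)
  also have "\<dots> = prod_list (map (\<lambda>r. complex_of_real r + iexp t) rs) / complex_of_real (coeff_mass rs)"
    unfolding generating_neg_roots_poly ..
  also have "\<dots> = pb_char (pb_params rs) t"
    using prod_plus_eq_pb_char_factors[of rs "iexp t"] coeff_mass_pos[of rs] nonneg
    unfolding pb_char_def by simp
  finally show ?thesis .
qed

end

theorem coeff_dist_asymp_normal:
  fixes rs :: "nat \<Rightarrow> real list"
  assumes nonneg: "\<And>n r. r \<in> set (rs n) \<Longrightarrow> 0 \<le> r"
    and var: "filterlim (\<lambda>n. sum_list (map (\<lambda>r. r / (1 + r)\<^sup>2) (rs n))) at_top sequentially"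
  shows "asymp_normal_CLT (\<lambda>n. length (rs n)) (\<lambda>n. coeff_dist (rs n))
      (\<lambda>n. sum_list (pb_params (rs n))) (\<lambda>n. sqrt (pb_var (pb_params (rs n))))
    \<and> asymp_normal_LLT (\<lambda>n. coeff_dist (rs n))
      (\<lambda>n. sum_list (pb_params (rs n))) (\<lambda>n. sqrt (pb_var (pb_params (rs n))))"
proof -
  have params: "\<And>n q. q \<in> set (pb_params (rs n)) \<Longrightarrow> 0 \<le> q \<and> q \<le> 1"
    using pb_params_bounds nonneg by blast
  have char: "\<And>n t. (\<Sum>j\<le>length (rs n). complex_of_real (coeff_dist (rs n) (int j)) * iexp (real j * t))
      = pb_char (pb_params (rs n)) t"
    using char_coeff_dist nonneg by blast
  have var': "filterlim (\<lambda>n. pb_var (pb_params (rs n))) at_top sequentially"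
    using var by (simp add: pb_var_pb_params nonneg)
  show ?thesis
    using coeff_dist_nonneg coeff_dist_eq_0 sum_coeff_dist nonneg
    by (intro conjI pb_central_limit[OF _ _ _ params char var'] pb_local_limit[OF _ params char var'])
      blast+
qed

section \<open>Laplacian spectra\<close>

lemma laplacian_carrier: "laplacian K F \<in> carrier_mat K K"
  unfolding laplacian_def by simp

lemma laplacian_index:
  "i < K \<Longrightarrow> j < K \<Longrightarrow>
    laplacian K F $$ (i, j) = (if i = j then real (graph_degree K F i) else 0) - (if F i j then 1 else 0)"
  unfolding laplacian_def by simp

lemma laplacian_symmetric:
  "simple_graph K F \<Longrightarrow> i < K \<Longrightarrow> j < K \<Longrightarrow> laplacian K F $$ (j, i) = laplacian K F $$ (i, j)"
  unfolding simple_graph_def by (auto simp: laplacian_index)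

lemma graph_degree_eq_sum: "real (graph_degree K F i) = (\<Sum>j<K. if F i j then 1 else 0)"
proof -
  have "{u. u < K \<and> F i u} = {u \<in> {..<K}. F i u}" by auto
  then have "graph_degree K F i = card {u \<in> {..<K}. F i u}" unfolding graph_degree_def by simp
  also have "\<dots> = (\<Sum>u\<in>{u \<in> {..<K}. F i u}. 1)" by simp
  also have "\<dots> = (\<Sum>u<K. if F i u then 1 else 0)" by (subst sum.inter_filter) auto
  finally show ?thesis by (auto simp: of_nat_sum intro!: sum.cong)
qed

lemma double_sum_sym_antisym:
  fixes L a :: "nat \<Rightarrow> nat \<Rightarrow> real"
  assumes L_sym: "\<And>i j. i < K \<Longrightarrow> j < K \<Longrightarrow> L j i = L i j" and a_antisym: "\<And>i j. a j i = - a i j"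
  shows "(\<Sum>i<K. \<Sum>j<K. L i j * a i j) = 0"
proof -
  have "(\<Sum>i<K. \<Sum>j<K. L i j * a i j) = (\<Sum>j<K. \<Sum>i<K. L i j * a i j)" by (rule sum.swap)
  also have "\<dots> = (\<Sum>j<K. \<Sum>i<K. - (L j i * a j i))"
  proof (intro sum.cong refl)
    fix i j assume "i \<in> {..<K}" "j \<in> {..<K}"
    then show "L i j * a i j = - (L j i * a j i)" using L_sym[of i j] a_antisym[of i j] by simp
  qed
  also have "\<dots> = - (\<Sum>i<K. \<Sum>j<K. L i j * a i j)" by (simp add: sum_negf)
  finally show ?thesis by simp
qed

lemma laplacian_quadratic_form_nonneg:
  fixes x :: "nat \<Rightarrow> real"
  assumes sg: "simple_graph K F"
  shows "0 \<le> (\<Sum>i<K. \<Sum>j<K. laplacian K F $$ (i, j) * (x i * x j))"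
proof -
  define e where "e i j = (if F i j then 1 else 0 :: real)" for i j
  have e_sym: "e j i = e i j" if "i < K" "j < K" for i j using sg that unfolding simple_graph_def e_def by auto
  have "(\<Sum>i<K. \<Sum>j<K. laplacian K F $$ (i, j) * (x i * x j))
      = (\<Sum>i<K. \<Sum>j<K. (if i = j then real (graph_degree K F i) * (x i * x i) else 0) - e i j * (x i * x j))"
    by (intro sum.cong refl) (simp add: laplacian_index e_def algebra_simps)
  also have "\<dots> = (\<Sum>i<K. real (graph_degree K F i) * (x i * x i)) - (\<Sum>i<K. \<Sum>j<K. e i j * (x i * x j))"
    by (simp add: sum_subtractf)
  also have "(\<Sum>i<K. real (graph_degree K F i) * (x i * x i)) = (\<Sum>i<K. \<Sum>j<K. e i j * (x i * x i))"
    unfolding graph_degree_eq_sum e_def by (simp add: sum_distrib_right)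
  finally have form: "(\<Sum>i<K. \<Sum>j<K. laplacian K F $$ (i, j) * (x i * x j)) = (\<Sum>i<K. \<Sum>j<K. e i j * (x i * x i - x i * x j))"
    by (simp add: sum_subtractf[symmetric] right_diff_distrib)
  have swap: "(\<Sum>i<K. \<Sum>j<K. e i j * (x i * x i - x i * x j)) = (\<Sum>i<K. \<Sum>j<K. e i j * (x j * x j - x j * x i))"
  proof -
    have "(\<Sum>i<K. \<Sum>j<K. e i j * (x i * x i - x i * x j)) = (\<Sum>j<K. \<Sum>i<K. e i j * (x i * x i - x i * x j))"
      by (rule sum.swap)
    also have "\<dots> = (\<Sum>j<K. \<Sum>i<K. e j i * (x i * x i - x i * x j))"
      by (intro sum.cong refl) (simp add: e_sym)
    finally show ?thesis by simp
  qed
  have "2 * (\<Sum>i<K. \<Sum>j<K. e i j * (x i * x i - x i * x j)) = (\<Sum>i<K. \<Sum>j<K. e i j * (x i - x j)\<^sup>2)"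
  proof -
    have "2 * (\<Sum>i<K. \<Sum>j<K. e i j * (x i * x i - x i * x j))
        = (\<Sum>i<K. \<Sum>j<K. e i j * (x i * x i - x i * x j)) + (\<Sum>i<K. \<Sum>j<K. e i j * (x j * x j - x j * x i))"
      using swap by simp
    also have "\<dots> = (\<Sum>i<K. \<Sum>j<K. e i j * (x i - x j)\<^sup>2)"
      by (simp add: sum.distrib[symmetric] power2_eq_square algebra_simps)
    finally show ?thesis .
  qed
  moreover have "0 \<le> (\<Sum>i<K. \<Sum>j<K. e i j * (x i - x j)\<^sup>2)"
    by (intro sum_nonneg) (auto simp: e_def)
  ultimately show ?thesis unfolding form by simp
qed

lemma laplacian_hermitian_form:
  fixes v :: "nat \<Rightarrow> complex"
  assumes sg: "simple_graph K F"
  defines "s \<equiv> \<Sum>i<K. \<Sum>j<K. cnj (v i) * (complex_of_real (laplacian K F $$ (i, j)) * v j)"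
  shows "Im s = 0" "0 \<le> Re s"
proof -
  define L x y where "L = laplacian K F" and "x i = Re (v i)" and "y i = Im (v i)" for i
  have "Im s = (\<Sum>i<K. \<Sum>j<K. L $$ (i, j) * (x i * y j - y i * x j))"
    unfolding s_def Im_sum L_def x_def y_def by (simp add: algebra_simps)
  also have "\<dots> = 0"
    by (rule double_sum_sym_antisym) (auto simp: L_def intro: laplacian_symmetric[OF sg])
  finally show "Im s = 0" .
  have "Re s = (\<Sum>i<K. \<Sum>j<K. L $$ (i, j) * (x i * x j)) + (\<Sum>i<K. \<Sum>j<K. L $$ (i, j) * (y i * y j))"
    unfolding s_def Re_sum L_def x_def y_def by (simp add: algebra_simps sum.distrib)
  then show "0 \<le> Re s"
    using laplacian_quadratic_form_nonneg[OF sg, of x] laplacian_quadratic_form_nonneg[OF sg, of y]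
    unfolding L_def by simp
qed

lemma laplacian_eigenvalue_real_nonneg:
  assumes sg: "simple_graph K F" and ev: "eigenvalue (map_mat complex_of_real (laplacian K F)) a"
  shows "Im a = 0 \<and> 0 \<le> Re a"
proof -
  define L where "L = laplacian K F"
  define A where "A = map_mat complex_of_real L"
  have L: "L \<in> carrier_mat K K" and A: "A \<in> carrier_mat K K"
    unfolding A_def L_def using laplacian_carrier by auto
  from ev obtain v where v: "v \<in> carrier_vec K" "v \<noteq> 0\<^sub>v K" "A *\<^sub>v v = a \<cdot>\<^sub>v v"
    unfolding eigenvalue_def eigenvector_def A_def[symmetric] L_def[symmetric] using A by auto
  have row: "(\<Sum>j<K. complex_of_real (L $$ (i, j)) * v $ j) = a * v $ i" if "i < K" for i
    using arg_cong[OF v(3), of "\<lambda>w. w $ i"] that A v(1) L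
    by (simp add: mult_mat_vec_def scalar_prod_def A_def atLeast0LessThan)
  define n where "n = (\<Sum>i<K. (cmod (v $ i))\<^sup>2)"
  have "0 < n"
  proof -
    obtain i where "i < K" "v $ i \<noteq> 0" using v(1,2) by (metis carrier_vecD eq_vecI index_zero_vec)
    then show ?thesis unfolding n_def by (intro sum_pos2[of _ i]) auto
  qed
  have "(\<Sum>i<K. \<Sum>j<K. cnj (v $ i) * (complex_of_real (L $$ (i, j)) * v $ j))
      = (\<Sum>i<K. cnj (v $ i) * (a * v $ i))"
    by (simp add: row sum_distrib_left[symmetric])
  also have "\<dots> = a * complex_of_real n"
    unfolding n_def of_real_sum sum_distrib_left
    by (intro sum.cong refl) (simp only: complex_norm_square, simp add: algebra_simps)
  finally have "Im (a * complex_of_real n) = 0 \<and> 0 \<le> Re (a * complex_of_real n)"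
    using laplacian_hermitian_form[OF sg, of "\<lambda>i. v $ i"] unfolding L_def by metis
  then show ?thesis using \<open>0 < n\<close> by (simp add: zero_le_mult_iff)
qed

lemma map_poly_of_real_linear_factors:
  "map_poly (of_real :: real \<Rightarrow> complex) (prod_list (map (\<lambda>r. [:- r, 1:]) rs))
    = prod_list (map (\<lambda>r. [:- complex_of_real r, 1:]) rs)"
proof (induction rs)
  case (Cons r rs)
  have "map_poly (of_real :: real \<Rightarrow> complex) ([:- r, 1:] * P) = [:- complex_of_real r, 1:] * map_poly of_real P"
    for P :: "real poly"
    by (simp only: mult_pCons_left of_real_hom.map_poly_hom_add of_real_hom.map_poly_hom_smult
        of_real_hom.map_poly_pCons_hom) (simp add: of_real_hom.map_poly_hom_smult)
  then show ?case using Cons by simp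
qed simp

text \<open>The complex roots of the characteristic polynomial are eigenvalues, hence real and nonnegative.\<close>

lemma char_poly_laplacian_factorization:
  assumes sg: "simple_graph K F"
  obtains rs where "char_poly (laplacian K F) = prod_list (map (\<lambda>r. [:- r, 1:]) rs)"
    "length rs = K" "\<And>r. r \<in> set rs \<Longrightarrow> 0 \<le> r"
proof -
  define L where "L = laplacian K F"
  define A where "A = map_mat complex_of_real L"
  have L: "L \<in> carrier_mat K K" and A: "A \<in> carrier_mat K K"
    unfolding A_def L_def using laplacian_carrier by auto
  obtain as where as: "char_poly A = prod_list (map (\<lambda>a. [:- a, 1:]) as)" "length as = K"
    using char_poly_factorized[OF A] by blast
  have real: "a = complex_of_real (Re a) \<and> 0 \<le> Re a" if "a \<in> set as" for a
  proof -
    have "poly (char_poly A) a = 0" unfolding as(1) using that by (rule linear_poly_root)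
    then have "eigenvalue A a" using eigenvalue_root_char_poly[OF A] by simp
    then show ?thesis using laplacian_eigenvalue_real_nonneg[OF sg]
      unfolding A_def L_def by (simp add: complex_eq_iff)
  qed
  have "map_poly complex_of_real (char_poly L) = char_poly A"
    unfolding A_def by (rule of_real_hom.char_poly_hom[OF L, symmetric])
  also have "\<dots> = prod_list (map (\<lambda>r. [:- complex_of_real r, 1:]) (map Re as))"
    unfolding as(1) map_map o_def
    by (rule arg_cong[where f = prod_list], rule map_cong[OF refl]) (use real in auto)
  also have "\<dots> = map_poly complex_of_real (prod_list (map (\<lambda>r. [:- r, 1:]) (map Re as)))"
    by (rule map_poly_of_real_linear_factors[symmetric])
  finally have "char_poly L = prod_list (map (\<lambda>r. [:- r, 1:]) (map Re as))"
    by (simp add: poly_eq_iff)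
  then show ?thesis using as(2) real by (intro that[of "map Re as"]) (auto simp: L_def)
qed

lemma lap_dist_eq_coeff_dist:
  assumes char: "char_poly (laplacian K F) = prod_list (map (\<lambda>r. [:- r, 1:]) rs)" and len: "length rs = K"
  shows "lap_dist K F = coeff_dist rs"
proof
  fix k
  have coeff: "lap_coeff K F j = coeff (neg_roots_poly rs) j" if "j \<le> K" for j
  proof -
    have "K + j = (K - j) + 2 * j" using that by simp
    then have "(-1::real) ^ (K + j) = (-1) ^ (K - j) * ((-1) ^ 2) ^ j" by (simp only: power_add power_mult)
    then have "(-1::real) ^ (K + j) = (-1) ^ (K - j)" by simp
    then show ?thesis unfolding lap_coeff_def char coeff_neg_roots_poly_eq_signed len by simp
  qed
  have "(\<Sum>j\<le>K. lap_coeff K F j) = coeff_mass rs" using sum_coeff_neg_roots_poly[of rs] len coeff by simp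
  then show "lap_dist K F k = coeff_dist rs k"
    unfolding lap_dist_def coeff_dist_def len using coeff by auto
qed

definition mat_trace :: "real mat \<Rightarrow> real" where
  "mat_trace A = (\<Sum>i<dim_row A. A $$ (i, i))"

lemma mat_trace_mult:
  "A \<in> carrier_mat n n \<Longrightarrow> B \<in> carrier_mat n n \<Longrightarrow> mat_trace (A * B) = (\<Sum>i<n. \<Sum>k<n. A $$ (i, k) * B $$ (k, i))"
  unfolding mat_trace_def by (simp add: scalar_prod_def atLeast0LessThan)

lemma mat_trace_mult_commute:
  "A \<in> carrier_mat n n \<Longrightarrow> B \<in> carrier_mat n n \<Longrightarrow> mat_trace (A * B) = mat_trace (B * A)"
  unfolding mat_trace_mult by (subst sum.swap) (simp add: mult.commute)

lemma mat_trace_similar: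
  assumes P: "P \<in> carrier_mat n n" and X: "X \<in> carrier_mat n n" and Q: "Q \<in> carrier_mat n n"
    and QP: "Q * P = 1\<^sub>m n"
  shows "mat_trace (P * X * Q) = mat_trace X"
proof -
  have "mat_trace (P * X * Q) = mat_trace (Q * (P * X))" using P X Q by (intro mat_trace_mult_commute) auto
  also have "Q * (P * X) = (Q * P) * X" using P X Q by (simp add: assoc_mult_mat)
  finally show ?thesis using QP X by simp
qed

lemma mat_trace_square_upper_triangular:
  assumes B: "B \<in> carrier_mat n n" and ut: "upper_triangular B"
  shows "mat_trace (B * B) = (\<Sum>i<n. (B $$ (i, i))\<^sup>2)"
proof -
  have "(\<Sum>k<n. B $$ (i, k) * B $$ (k, i)) = (B $$ (i, i))\<^sup>2" if i: "i < n" for i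
  proof -
    have "B $$ (i, k) * B $$ (k, i) = 0" if "k < n" "k \<noteq> i" for k
      using ut B i that unfolding upper_triangular_def by (cases "k < i") auto
    then have "(\<Sum>k<n. B $$ (i, k) * B $$ (k, i)) = (\<Sum>k\<in>{i}. B $$ (i, k) * B $$ (k, i))"
      using i by (intro sum.mono_neutral_right) auto
    then show ?thesis by (simp add: power2_eq_square)
  qed
  then show ?thesis unfolding mat_trace_mult[OF B B] by simp
qed

text \<open>Via a Schur decomposition \<open>L = P B Q\<close> with \<open>B\<close> upper triangular with diagonal \<open>es\<close>.\<close>

lemma mat_trace_eq_sum_roots:
  assumes L: "L \<in> carrier_mat n n" and char: "char_poly L = prod_list (map (\<lambda>e. [:- e, 1:]) es)"
  shows "mat_trace L = sum_list es" "mat_trace (L * L) = sum_list (map (\<lambda>x. x\<^sup>2) es)"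
proof -
  obtain B P Q where "schur_decomposition L es = (B, P, Q)" by (cases "schur_decomposition L es") auto
  from schur_decomposition[OF L char this] have sim: "similar_mat_wit L B P Q"
    and ut: "upper_triangular B" and diag: "diag_mat B = es" by auto
  have B: "B \<in> carrier_mat n n" and P: "P \<in> carrier_mat n n" and Q: "Q \<in> carrier_mat n n"
    and QP: "Q * P = 1\<^sub>m n" and L_eq: "L = P * B * Q"
    using similar_mat_witD2[OF L sim] by auto
  have es: "es = map (\<lambda>i. B $$ (i, i)) [0..<n]" using diag B unfolding diag_mat_def by simp
  have "mat_trace L = mat_trace B" unfolding L_eq by (rule mat_trace_similar[OF P B Q QP])
  then show "mat_trace L = sum_list es"
    unfolding es mat_trace_def using B by (simp add: sum_list_sum_nth atLeast0LessThan)
  have "L * L = P * B * (Q * (P * B * Q))" unfolding L_eq using P B Q by (simp add: assoc_mult_mat[of _ n n _ n _ n])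
  also have "Q * (P * B * Q) = (Q * P) * B * Q" using P B Q by (simp add: assoc_mult_mat[of _ n n _ n _ n])
  also have "P * B * ((Q * P) * B * Q) = P * (B * B) * Q"
    using P B Q QP by (simp add: assoc_mult_mat[of _ n n _ n _ n])
  finally have "mat_trace (L * L) = mat_trace (B * B)" using mat_trace_similar[OF P _ Q QP, of "B * B"] B by simp
  then show "mat_trace (L * L) = sum_list (map (\<lambda>x. x\<^sup>2) es)"
    unfolding mat_trace_square_upper_triangular[OF B ut] es by (simp add: sum_list_sum_nth atLeast0LessThan)
qed

lemma mat_trace_laplacian: "simple_graph K F \<Longrightarrow> mat_trace (laplacian K F) = (\<Sum>i<K. real (graph_degree K F i))"
  unfolding mat_trace_def simple_graph_def using laplacian_carrier[of K F] by (simp add: laplacian_index)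

lemma mat_trace_laplacian_square:
  assumes sg: "simple_graph K F"
  shows "mat_trace (laplacian K F * laplacian K F)
    = (\<Sum>i<K. (real (graph_degree K F i))\<^sup>2 + real (graph_degree K F i))"
proof -
  define L where "L = laplacian K F"
  have "L $$ (i, k) * L $$ (k, i) = (if i = k then (real (graph_degree K F i))\<^sup>2 else 0) + (if F i k then 1 else 0)"
    if "i < K" "k < K" for i k
    using that laplacian_symmetric[OF sg, of i k] sg unfolding L_def simple_graph_def
    by (auto simp: laplacian_index power2_eq_square)
  then have "mat_trace (L * L)
      = (\<Sum>i<K. \<Sum>k<K. (if i = k then (real (graph_degree K F i))\<^sup>2 else 0) + (if F i k then 1 else 0))"
    unfolding L_def mat_trace_mult[OF laplacian_carrier laplacian_carrier] by (intro sum.cong refl) auto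
  then show ?thesis unfolding L_def by (simp add: sum.distrib graph_degree_eq_sum)
qed

section \<open>Cones over regular graphs\<close>

lemma simple_graph_cone: "simple_graph N E \<Longrightarrow> simple_graph (N + 1) (cone_adj N E)"
  unfolding simple_graph_def cone_adj_def by auto

lemma graph_degree_cone:
  "i < N \<Longrightarrow> graph_degree (N + 1) (cone_adj N E) i = graph_degree N E i + 1"
  "graph_degree (N + 1) (cone_adj N E) N = N"
proof -
  assume "i < N"
  then have "{u. u < N + 1 \<and> cone_adj N E i u} = insert N {u. u < N \<and> E i u}"
    unfolding cone_adj_def by auto
  then show "graph_degree (N + 1) (cone_adj N E) i = graph_degree N E i + 1"
    unfolding graph_degree_def by simp
next
  have "{u. u < N + 1 \<and> cone_adj N E N u} = {..<N}" unfolding cone_adj_def by auto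
  then show "graph_degree (N + 1) (cone_adj N E) N = N" unfolding graph_degree_def by simp
qed

lemma cone_degree_sums:
  assumes reg: "regular_graph N E d"
  shows "(\<Sum>i<N + 1. real (graph_degree (N + 1) (cone_adj N E) i)) = real N * (real d + 2)"
    and "(\<Sum>i<N + 1. (real (graph_degree (N + 1) (cone_adj N E) i))\<^sup>2 + real (graph_degree (N + 1) (cone_adj N E) i))
      = real N * (real d + 1) * (real d + 2) + (real N)\<^sup>2 + real N"
proof -
  have deg: "graph_degree (Suc N) (cone_adj N E) i = d + 1" if "i < N" for i
    using graph_degree_cone(1)[OF that] reg that unfolding regular_graph_def by simp
  have apex: "graph_degree (Suc N) (cone_adj N E) N = N" using graph_degree_cone(2)[of N E] by simp
  show "(\<Sum>i<N + 1. real (graph_degree (N + 1) (cone_adj N E) i)) = real N * (real d + 2)"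
    by (simp add: deg apex algebra_simps)
  show "(\<Sum>i<N + 1. (real (graph_degree (N + 1) (cone_adj N E) i))\<^sup>2 + real (graph_degree (N + 1) (cone_adj N E) i))
      = real N * (real d + 1) * (real d + 2) + (real N)\<^sup>2 + real N"
    by (simp add: deg apex sum.distrib power2_eq_square algebra_simps)
qed

text \<open>The eigenvector is \<open>1\<close> on the base and \<open>-N\<close> at the apex.\<close>

lemma cone_laplacian_eigenvalue:
  assumes reg: "regular_graph N E d" and N: "1 \<le> N"
  shows "poly (char_poly (laplacian (N + 1) (cone_adj N E))) (real N + 1) = 0"
proof -
  define L where "L = laplacian (N + 1) (cone_adj N E)"
  define w where "w = vec (N + 1) (\<lambda>i. if i < N then 1 else - real N)"
  have L: "L \<in> carrier_mat (N + 1) (N + 1)" unfolding L_def by (rule laplacian_carrier)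
  have w: "w \<in> carrier_vec (N + 1)" "w \<noteq> 0\<^sub>v (N + 1)"
    using N unfolding w_def by (auto simp: vec_eq_iff dest!: spec[of _ N])
  have row: "(\<Sum>j<N. L $$ (i, j)) + L $$ (i, N) * (- real N) = (real N + 1) * w $ i" if "i < N + 1" for i
  proof (cases "i < N")
    case True
    have "(\<Sum>j<N. if E i j then 1 else 0) = real d"
      using graph_degree_eq_sum[of N E i] reg True unfolding regular_graph_def by simp
    moreover have "L $$ (i, j) = (if i = j then real d + 1 else 0) - (if E i j then 1 else 0)" if "j < N" for j
      unfolding L_def using True that graph_degree_cone(1)[OF True, of E] reg
      by (auto simp: laplacian_index cone_adj_def regular_graph_def)
    moreover have "L $$ (i, N) = -1" unfolding L_def using True by (simp add: laplacian_index cone_adj_def)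
    ultimately show ?thesis using True unfolding w_def by (simp add: sum_subtractf)
  next
    case False
    then have "i = N" using that by simp
    moreover have "L $$ (N, j) = -1" if "j < N" for j
      unfolding L_def using that by (simp add: laplacian_index cone_adj_def)
    moreover have "L $$ (N, N) = real N"
      unfolding L_def using graph_degree_cone(2)[of N E] by (simp add: laplacian_index cone_adj_def)
    ultimately show ?thesis unfolding w_def by (simp add: algebra_simps)
  qed
  have "L *\<^sub>v w = (real N + 1) \<cdot>\<^sub>v w"
  proof (rule eq_vecI)
    fix i assume "i < dim_vec ((real N + 1) \<cdot>\<^sub>v w)"
    then have i: "i < N + 1" using w by simp
    have "(L *\<^sub>v w) $ i = (\<Sum>j<N + 1. L $$ (i, j) * w $ j)"
      using i L w by (simp add: mult_mat_vec_def scalar_prod_def atLeast0LessThan)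
    also have "\<dots> = (\<Sum>j<N. L $$ (i, j)) + L $$ (i, N) * (- real N)" unfolding w_def by simp
    finally show "(L *\<^sub>v w) $ i = ((real N + 1) \<cdot>\<^sub>v w) $ i" using row[OF i] i w by simp
  qed (use L w in simp)
  then have "eigenvalue L (real N + 1)"
    unfolding eigenvalue_def eigenvector_def using L w by (intro exI[of _ w]) auto
  then show ?thesis using eigenvalue_root_char_poly[OF L] unfolding L_def by simp
qed

lemma bernoulli_var_of_root_lower_bound:
  fixes x K :: real assumes x: "0 \<le> x" and K: "0 < K"
  shows "(x - x\<^sup>2 / K) / (1 + K)\<^sup>2 \<le> x / (1 + x)\<^sup>2"
proof (cases "x \<le> K")
  case True
  have "(x - x\<^sup>2 / K) / (1 + K)\<^sup>2 \<le> x / (1 + K)\<^sup>2"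
    using K by (intro divide_right_mono) auto
  also have "\<dots> \<le> x / (1 + x)\<^sup>2"
    using True x by (intro divide_left_mono power_mono mult_pos_pos) auto
  finally show ?thesis .
next
  case False
  then have "x - x\<^sup>2 / K \<le> 0" using K x by (simp add: power2_eq_square field_simps)
  then have "(x - x\<^sup>2 / K) / (1 + K)\<^sup>2 \<le> 0" by (intro divide_nonpos_nonneg) auto
  also have "0 \<le> x / (1 + x)\<^sup>2" using x by simp
  finally show ?thesis .
qed

text \<open>
  Apart from one root \<open>c\<close>, large roots are controlled by the sum of squares and contribute little;
  the remaining ones each contribute at least a fixed fraction of themselves.
\<close>

lemma sum_bernoulli_var_of_roots_lower_bound:
  fixes rs :: "real list" and c K :: real
  assumes nonneg: "\<And>x. x \<in> set rs \<Longrightarrow> 0 \<le> x" and c: "c \<in> set rs" and K: "0 < K"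
  shows "((sum_list rs - c) - (sum_list (map (\<lambda>x. x\<^sup>2) rs) - c\<^sup>2) / K) / (1 + K)\<^sup>2
    \<le> sum_list (map (\<lambda>x. x / (1 + x)\<^sup>2) rs)"
proof -
  define rs' where "rs' = remove1 c rs"
  have "((sum_list rs - c) - (sum_list (map (\<lambda>x. x\<^sup>2) rs) - c\<^sup>2) / K) / (1 + K)\<^sup>2
      = (sum_list rs' - sum_list (map (\<lambda>x. x\<^sup>2) rs') / K) / (1 + K)\<^sup>2"
    unfolding rs'_def using sum_list_map_remove1[OF c, of "\<lambda>x. x"] sum_list_map_remove1[OF c, of "\<lambda>x. x\<^sup>2"]
    by simp
  also have "\<dots> = sum_list (map (\<lambda>x. (x - x\<^sup>2 / K) / (1 + K)\<^sup>2) rs')"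
    by (induction rs') (simp_all add: field_simps add_divide_distrib diff_divide_distrib)
  also have "\<dots> \<le> sum_list (map (\<lambda>x. x / (1 + x)\<^sup>2) rs')"
    using nonneg set_remove1_subset[of c rs] K unfolding rs'_def
    by (intro sum_list_mono bernoulli_var_of_root_lower_bound) auto
  also have "\<dots> \<le> sum_list (map (\<lambda>x. x / (1 + x)\<^sup>2) rs)"
    unfolding rs'_def using sum_list_map_remove1[OF c, of "\<lambda>x. x / (1 + x)\<^sup>2"] nonneg[OF c] by simp
  finally show ?thesis .
qed

lemma cone_laplacian_roots:
  assumes sg: "simple_graph N E" and reg: "regular_graph N E d"
  obtains rs where "char_poly (laplacian (N + 1) (cone_adj N E)) = prod_list (map (\<lambda>r. [:- r, 1:]) rs)"
    "length rs = N + 1" "\<And>r. r \<in> set rs \<Longrightarrow> 0 \<le> r"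
    "1 \<le> N \<Longrightarrow> (real N * (real d + 1) / 2 - 1) / (2 * real d + 5)\<^sup>2 \<le> sum_list (map (\<lambda>r. r / (1 + r)\<^sup>2) rs)"
proof -
  define L where "L = laplacian (N + 1) (cone_adj N E)"
  have sg_cone: "simple_graph (N + 1) (cone_adj N E)" using sg by (rule simple_graph_cone)
  obtain rs where char: "char_poly L = prod_list (map (\<lambda>r. [:- r, 1:]) rs)" and len: "length rs = N + 1"
    and nonneg: "\<And>r. r \<in> set rs \<Longrightarrow> 0 \<le> r"
    using char_poly_laplacian_factorization[OF sg_cone] unfolding L_def by blast
  have L: "L \<in> carrier_mat (N + 1) (N + 1)" unfolding L_def by (rule laplacian_carrier)
  have sum: "sum_list rs = real N * (real d + 2)"
    using mat_trace_eq_sum_roots(1)[OF L char] mat_trace_laplacian[OF sg_cone] cone_degree_sums(1)[OF reg]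
    unfolding L_def by simp
  have sum_sq: "sum_list (map (\<lambda>x. x\<^sup>2) rs) = real N * (real d + 1) * (real d + 2) + (real N)\<^sup>2 + real N"
    using mat_trace_eq_sum_roots(2)[OF L char] mat_trace_laplacian_square[OF sg_cone] cone_degree_sums(2)[OF reg]
    unfolding L_def by simp
  have "(real N * (real d + 1) / 2 - 1) / (2 * real d + 5)\<^sup>2 \<le> sum_list (map (\<lambda>r. r / (1 + r)\<^sup>2) rs)"
    if "1 \<le> N"
  proof -
    define K where "K = 2 * (real d + 2)"
    have "poly (prod_list (map (\<lambda>r. [:- r, 1:]) rs)) (real N + 1) = 0"
      using cone_laplacian_eigenvalue[OF reg that] char unfolding L_def by simp
    then have root: "real N + 1 \<in> set rs" by (auto simp: poly_prod_list_zero_iff)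
    have "sum_list (map (\<lambda>x. x\<^sup>2) rs) - (real N + 1)\<^sup>2 \<le> real N * (real d + 1) * (real d + 2)"
      unfolding sum_sq by (simp add: power2_eq_square algebra_simps)
    then have "(sum_list (map (\<lambda>x. x\<^sup>2) rs) - (real N + 1)\<^sup>2) / K \<le> real N * (real d + 1) * (real d + 2) / K"
      unfolding K_def by (rule divide_right_mono) simp
    also have "\<dots> = real N * (real d + 1) / 2" unfolding K_def by (simp add: field_simps)
    moreover have "sum_list rs - (real N + 1) = real N * (real d + 1) - 1" unfolding sum by (simp add: algebra_simps)
    ultimately have "real N * (real d + 1) / 2 - 1
        \<le> (sum_list rs - (real N + 1)) - (sum_list (map (\<lambda>x. x\<^sup>2) rs) - (real N + 1)\<^sup>2) / K"
      by linarith
    then have "(real N * (real d + 1) / 2 - 1) / (2 * real d + 5)\<^sup>2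
        \<le> ((sum_list rs - (real N + 1)) - (sum_list (map (\<lambda>x. x\<^sup>2) rs) - (real N + 1)\<^sup>2) / K) / (2 * real d + 5)\<^sup>2"
      by (rule divide_right_mono) simp
    also have "\<dots> \<le> sum_list (map (\<lambda>r. r / (1 + r)\<^sup>2) rs)"
      using sum_bernoulli_var_of_roots_lower_bound[OF nonneg root, of K]
      unfolding K_def by (simp add: algebra_simps)
    finally show ?thesis .
  qed
  then show ?thesis using that char len nonneg unfolding L_def by blast
qed

lemma filterlim_at_top_linear_lower_bound:
  fixes f :: "nat \<Rightarrow> real" and g :: "nat \<Rightarrow> nat"
  assumes "strict_mono g" "0 < a" and "\<And>n. 1 \<le> g n \<Longrightarrow> a * real (g n) + b \<le> f n"
  shows "filterlim f at_top sequentially"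
proof (rule filterlim_at_top_mono)
  show "filterlim (\<lambda>n. a * real n + b) at_top sequentially"
    using \<open>0 < a\<close> by real_asymp
  show "eventually (\<lambda>n. a * real n + b \<le> f n) sequentially"
    using eventually_ge_at_top[of 1]
  proof eventually_elim
    case (elim n)
    have "n \<le> g n" using \<open>strict_mono g\<close> by (rule seq_suble)
    then have "1 \<le> g n" and "a * real n \<le> a * real (g n)" using elim \<open>0 < a\<close> by simp_all
    then show ?case using assms(3)[of n] by linarith
  qed
qed

lemma cone_sequence_roots:
  fixes d :: nat and nv :: "nat \<Rightarrow> nat" and E :: "nat \<Rightarrow> nat \<Rightarrow> nat \<Rightarrow> bool"
  assumes simple: "\<And>n. simple_graph (nv n) (E n)" and regular: "\<And>n. regular_graph (nv n) (E n) d"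
    and incr: "strict_mono nv"
  shows "\<exists>rs. (\<forall>n. char_poly (laplacian (nv n + 1) (cone_adj (nv n) (E n))) = prod_list (map (\<lambda>r. [:- r, 1:]) (rs n)))
    \<and> (\<forall>n. length (rs n) = nv n + 1) \<and> (\<forall>n. \<forall>r\<in>set (rs n). 0 \<le> r)
    \<and> filterlim (\<lambda>n. sum_list (map (\<lambda>r. r / (1 + r)\<^sup>2) (rs n))) at_top sequentially"
proof -
  have "\<forall>n. \<exists>rs. char_poly (laplacian (nv n + 1) (cone_adj (nv n) (E n))) = prod_list (map (\<lambda>r. [:- r, 1:]) rs)
      \<and> length rs = nv n + 1 \<and> (\<forall>r\<in>set rs. 0 \<le> r)
      \<and> (1 \<le> nv n \<longrightarrow> (real (nv n) * (real d + 1) / 2 - 1) / (2 * real d + 5)\<^sup>2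
           \<le> sum_list (map (\<lambda>r. r / (1 + r)\<^sup>2) rs))"
    by (intro allI, rule cone_laplacian_roots[OF simple regular], blast)
  from choice[OF this] obtain rs where rs: "\<forall>n. char_poly (laplacian (nv n + 1) (cone_adj (nv n) (E n))) = prod_list (map (\<lambda>r. [:- r, 1:]) (rs n))
      \<and> length (rs n) = nv n + 1 \<and> (\<forall>r\<in>set (rs n). 0 \<le> r)
      \<and> (1 \<le> nv n \<longrightarrow> (real (nv n) * (real d + 1) / 2 - 1) / (2 * real d + 5)\<^sup>2
           \<le> sum_list (map (\<lambda>r. r / (1 + r)\<^sup>2) (rs n)))"
    by blast
  have char: "\<And>n. char_poly (laplacian (nv n + 1) (cone_adj (nv n) (E n))) = prod_list (map (\<lambda>r. [:- r, 1:]) (rs n))"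
    and len: "\<And>n. length (rs n) = nv n + 1" and nonneg: "\<And>n r. r \<in> set (rs n) \<Longrightarrow> 0 \<le> r"
    and var: "\<And>n. 1 \<le> nv n \<Longrightarrow>
      (real (nv n) * (real d + 1) / 2 - 1) / (2 * real d + 5)\<^sup>2 \<le> sum_list (map (\<lambda>r. r / (1 + r)\<^sup>2) (rs n))"
    using rs by blast+
  define a b where "a = (real d + 1) / 2 / (2 * real d + 5)\<^sup>2" and "b = - 1 / (2 * real d + 5)\<^sup>2"
  have "0 < 2 * real d + 5" by simp
  then have line: "a * x + b = (x * (real d + 1) / 2 - 1) / (2 * real d + 5)\<^sup>2" for x
    unfolding a_def b_def by (simp add: field_simps)
  have "filterlim (\<lambda>n. sum_list (map (\<lambda>r. r / (1 + r)\<^sup>2) (rs n))) at_top sequentially"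
    by (rule filterlim_at_top_linear_lower_bound[OF incr, where a = a and b = b])
      (simp add: a_def, simp add: line var)
  then show ?thesis using char len nonneg by blast
qed

theorem corollary2p11:
  fixes d :: nat and nv :: "nat \<Rightarrow> nat" and E :: "nat \<Rightarrow> nat \<Rightarrow> nat \<Rightarrow> bool"
  assumes simple: "\<And>n. simple_graph (nv n) (E n)"
    and regular: "\<And>n. regular_graph (nv n) (E n) d"
    and incr: "strict_mono nv"
  shows "asymp_normal_CLT (\<lambda>n. nv n + 1) (\<lambda>n. lap_dist (nv n + 1) (cone_adj (nv n) (E n)))
           (\<lambda>n. lap_mean (nv n + 1) (cone_adj (nv n) (E n)))
           (\<lambda>n. sqrt (lap_var (nv n + 1) (cone_adj (nv n) (E n))))
       \<and> asymp_normal_LLT (\<lambda>n. lap_dist (nv n + 1) (cone_adj (nv n) (E n)))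
           (\<lambda>n. lap_mean (nv n + 1) (cone_adj (nv n) (E n)))
           (\<lambda>n. sqrt (lap_var (nv n + 1) (cone_adj (nv n) (E n))))"
proof -
  obtain rs where
    char: "\<And>n. char_poly (laplacian (nv n + 1) (cone_adj (nv n) (E n))) = prod_list (map (\<lambda>r. [:- r, 1:]) (rs n))"
    and len: "\<And>n. length (rs n) = nv n + 1" and nonneg: "\<And>n r. r \<in> set (rs n) \<Longrightarrow> 0 \<le> r"
    and var: "filterlim (\<lambda>n. sum_list (map (\<lambda>r. r / (1 + r)\<^sup>2) (rs n))) at_top sequentially"
    using cone_sequence_roots[OF simple regular incr] by blast
  have dist: "lap_dist (nv n + 1) (cone_adj (nv n) (E n)) = coeff_dist (rs n)" for n
    using lap_dist_eq_coeff_dist[OF char len] .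
  have mean: "lap_mean (nv n + 1) (cone_adj (nv n) (E n)) = sum_list (pb_params (rs n))" for n
    unfolding lap_mean_def dist using mean_coeff_dist[of "rs n"] nonneg len[of n] by simp
  have var_eq: "lap_var (nv n + 1) (cone_adj (nv n) (E n)) = pb_var (pb_params (rs n))" for n
    unfolding lap_var_def mean dist using variance_coeff_dist[of "rs n"] nonneg len[of n] by simp
  show ?thesis
    using coeff_dist_asymp_normal[where rs = rs, OF nonneg var] unfolding dist mean var_eq by (simp only: len)
qed

end
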